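(* Let $0<p<1$ and let $Y_1,Y_2,\ldots$ be i.i.d. with $\Pr(Y_i=k)=(1-p)^kp$ for $k\ge0$. Let $L_n$ be the length of the longest gap in $\{Y_{(1)},Y_{(1)}+1,\ldots,Y_{(n)}\}$, where a gap is a maximal run of consecutive integers in this range not equal to any of $Y_1,\ldots,Y_n$ (and $L_n=0$ if there is none). Then \begin{align*} \mathbb{E}L_n&\in\left[\frac{(1-p)^2}{p}-\frac{(1-p)^{2n}}{1-(1-p)^n},\ \frac{1.5}{p}+1\right],\\ \mathbb{E}L_n^2&\in\left[\frac{2(1-p)^2}{p^2}-\frac{2(1-p)^{2n}}{(1-(1-p)^n)^2},\ \frac{3.3}{p^2}+\frac{3}{2p}+2\right],\\ \mathrm{Var}(L_n)&\in\left[0,\ \frac{3.3}{p^2}+\frac{3}{2p}+2-\left(\frac{(1-p)^2}{p}-\frac{(1-p)^{2n}}{1-(1-p)^n}\right)^2\right], \end{align*} so that, with $\tilde\in$ denoting asymptotic upper and lower bounds: as $n\to\infty$: $\mathbb{E}L_n\,\tilde\in\,\left[\frac{(1-p)^2}{p},\frac{1.5}{p}+1\right]$, $\mathbb{E}L_n^2\,\tilde\in\,\left[\frac{2(1-p)^2}{p^2},\frac{3.3}{p^2}+\frac{3}{2p}+2\right]$, $\mathrm{Var}(L_n)\,\tilde\in\,\left[0,\frac{2.3}{p^2}+\frac{5.5}{p}\right]$; as $p\to0^+$: $\mathbb{E}L_n\,\tilde\in\,\left[\frac{n-1}{np},\frac{1.5}{p}\right]$, $\mathbb{E}L_n^2\,\tilde\in\,\left[\frac{2n^2(1-p)^2-2}{n^2p^2},\frac{3.3}{p^2}\right]$,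 $\mathrm{Var}(L_n)\,\tilde\in\,\left[0,\frac{2.3n^2+2n-1}{n^2p^2}\right]$; as $p\to1^-$: $\mathbb{E}L_n\,\tilde\in\,[0,2.5]$, $\mathbb{E}L_n^2\,\tilde\in\,[0,6.8]$, $\mathrm{Var}(L_n)\,\tilde\in\,[0,6.8]$.
   Context: $Y_{(1)}$ and $Y_{(n)}$ denote the minimum and maximum of $Y_1,\ldots,Y_n$. *)

theory Defs
  imports "HOL-Probability.Probability"
begin

text \<open>Gaps of a finite nonempty set S of naturals within the range {Min S .. Max S}:
  a gap is a maximal run {a..b} of consecutive integers in the range none of which
  lies in S (maximality: a-1 and b+1 lie in S).\<close>

definition gap_lengths :: "nat set \<Rightarrow> nat set" where
  "gap_lengths S = {b - a + 1 | a b. Min S \<le> a \<and> a \<le> b \<and> b \<le> Max S \<and>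
      {a..b} \<inter> S = {} \<and> a - 1 \<in> S \<and> b + 1 \<in> S}"

definition longest_gap :: "nat set \<Rightarrow> nat" where
  "longest_gap S = Max ({0} \<union> gap_lengths S)"

definition L :: "nat \<Rightarrow> (nat \<Rightarrow> nat) \<Rightarrow> nat" where
  "L n y = longest_gap (y ` {1..n})"

end

theory Submission
  imports Defs
begin

(* Write q = 1 - p and T k = P(L_n > k), so that E L_n = (SUM k. T k) and
   E L_n^2 = (SUM k. (2k + 1) T k).

   Upper bounds: if L_n > k, some gap of length at least k + 1 starts at a point a with
   Y_i = a - 1 for some i, no sample in [a, a + k] and some sample above it. By
   inclusion-exclusion each such window has probability a signed sum of four n-th powers,
   and summing over a telescopes to at most q^(k+1) / (1 - q^(k+1)). Together with T k <= 1
   this bounds both sums: by geometric series when p >= 1/4, and for p < 1/4 by comparison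
   with the integral of q^t / (1 - q^t) beyond the index where q^k crosses 1/2.

   Lower bounds (n >= 2): the disjoint events "Y_i = j + k + 2 and all other samples <= j"
   each force a gap of length k + 1; a trapezoid estimate shows their total probability is
   at least 2 q^(k+2) / (1 + q), and geometric series give E L_n >= q^2/p and
   E L_n^2 >= 2 q^2/p^2. The variance bounds follow from Var = E L_n^2 - (E L_n)^2. *)

lemma power_diff_le_mult_power:
  fixes u v :: real
  assumes "0 \<le> v" "v \<le> u"
  shows "u ^ n - v ^ n \<le> real n * (u - v) * u ^ (n - 1)"
proof (induction n)
  case (Suc n)
  have "u ^ Suc n - v ^ Suc n = u * (u ^ n - v ^ n) + (u - v) * v ^ n"
    by (simp add: algebra_simps)
  also have "\<dots> \<le> u * (real n * (u - v) * u ^ (n - 1)) + (u - v) * u ^ n"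
    using Suc assms by (intro add_mono mult_left_mono power_mono) auto
  also have "\<dots> = real (Suc n) * (u - v) * u ^ (Suc n - 1)"
    by (cases n) (auto simp: algebra_simps)
  finally show ?case .
qed simp

lemma mult_power_le_power_diff:
  fixes u v :: real
  assumes "0 \<le> v" "v \<le> u"
  shows "real n * (u - v) * v ^ (n - 1) \<le> u ^ n - v ^ n"
proof (induction n)
  case (Suc n)
  have "real (Suc n) * (u - v) * v ^ (Suc n - 1) = v * (real n * (u - v) * v ^ (n - 1)) + (u - v) * v ^ n"
    by (cases n) (auto simp: algebra_simps)
  also have "\<dots> \<le> v * (u ^ n - v ^ n) + (u - v) * v ^ n"
    using Suc assms by (intro add_mono mult_left_mono) auto
  also have "\<dots> \<le> u * (u ^ n - v ^ n) + (u - v) * v ^ n"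
    using assms by (intro add_mono mult_right_mono) (auto simp: power_mono)
  also have "\<dots> = u ^ Suc n - v ^ Suc n"
    by (simp add: algebra_simps)
  finally show ?case .
qed simp

lemma power_diff_le_trapezoid:
  fixes u v :: real
  assumes "0 \<le> v" "v \<le> u"
  shows "2 * (u ^ n - v ^ n) \<le> real n * (u - v) * (u ^ (n - 1) + v ^ (n - 1))"
proof (cases n)
  case (Suc m)
  have mixed_le: "u ^ i * v ^ (m - i) + u ^ (m - i) * v ^ i \<le> u ^ m + v ^ m" if "i \<le> m" for i
  proof -
    have "0 \<le> (u ^ i - v ^ i) * (u ^ (m - i) - v ^ (m - i))"
      using assms by (intro mult_nonneg_nonneg) (auto simp: power_mono)
    moreover have "u ^ i * u ^ (m - i) = u ^ m" "v ^ i * v ^ (m - i) = v ^ m"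
      using that by (auto simp: power_add[symmetric])
    ultimately show ?thesis
      by (simp add: algebra_simps)
  qed
  have reflect: "(\<Sum>i<n. u ^ (m - i) * v ^ i) = (\<Sum>i<n. u ^ i * v ^ (m - i))"
    using Suc by (intro sum.reindex_bij_witness[of _ "\<lambda>i. m - i" "\<lambda>i. m - i"]) auto
  have "2 * (\<Sum>i<n. u ^ i * v ^ (m - i)) = (\<Sum>i<n. u ^ i * v ^ (m - i) + u ^ (m - i) * v ^ i)"
    by (simp add: sum.distrib reflect)
  also have "\<dots> \<le> (\<Sum>i<n. u ^ m + v ^ m)"
    using Suc by (intro sum_mono mixed_le) auto
  finally have "2 * (\<Sum>i<n. u ^ i * v ^ (m - i)) \<le> real n * (u ^ m + v ^ m)"
    by simp
  then have "(u - v) * (2 * (\<Sum>i<n. u ^ i * v ^ (m - i))) \<le> (u - v) * (real n * (u ^ m + v ^ m))"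
    using assms by (intro mult_left_mono) auto
  moreover have "u ^ n - v ^ n = (u - v) * (\<Sum>i<n. u ^ i * v ^ (m - i))"
    using power_diff_sumr2[of u n v] Suc by (simp add: mult.commute)
  ultimately show ?thesis
    using Suc by (simp add: algebra_simps)
qed simp

lemma power_diff_le_scaled_power_diff:
  fixes u u' \<delta> c :: real
  assumes "0 \<le> u - \<delta>" "0 \<le> c" "u \<le> u'" "\<delta> = c * (u' - u)"
  shows "u ^ n - (u - \<delta>) ^ n \<le> c * (u' ^ n - u ^ n)"
proof -
  have "0 \<le> \<delta>"
    using assms by simp
  then have "0 \<le> u"
    using assms(1) by linarith
  have "u ^ n - (u - \<delta>) ^ n \<le> real n * \<delta> * u ^ (n - 1)"
    using power_diff_le_mult_power[of "u - \<delta>" u n] assms \<open>0 \<le> \<delta>\<close> by simp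
  also have "\<dots> = c * (real n * (u' - u) * u ^ (n - 1))"
    using assms by simp
  also have "\<dots> \<le> c * (u' ^ n - u ^ n)"
    using assms \<open>0 \<le> u\<close> by (intro mult_left_mono mult_power_le_power_diff) auto
  finally show ?thesis .
qed

lemma sum_odd_eq_square: "(\<Sum>i<m. 2 * real i + 1) = real m ^ 2"
  by (induction m) (auto simp: power2_eq_square algebra_simps)

lemma sums_odd_mult_power:
  fixes x :: real
  assumes "\<bar>x\<bar> < 1"
  shows "(\<lambda>j. (2 * real j + 1) * x ^ j) sums ((1 + x) / (1 - x)\<^sup>2)"
proof -
  have "(\<lambda>j. 2 * (real (Suc j) * x ^ j) - x ^ j) sums (2 * (1 / (1 - x)\<^sup>2) - 1 / (1 - x))"
    using assms by (intro sums_diff sums_mult geometric_deriv_sums geometric_sums) auto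
  moreover have "2 * (1 / (1 - x)\<^sup>2) - 1 / (1 - x) = (1 + x) / (1 - x)\<^sup>2"
    using assms by (simp add: field_simps) (simp add: power2_eq_square power4_eq_xxxx algebra_simps)
  ultimately show ?thesis
    by (simp add: algebra_simps)
qed

lemma summable_suminf_le_sums:
  fixes f g :: "nat \<Rightarrow> real"
  assumes "\<And>k. 0 \<le> f k" "\<And>k. f k \<le> g k" "g sums s"
  shows "summable f \<and> suminf f \<le> s"
proof -
  have "summable f"
    using assms by (intro summable_comparison_test[OF _ sums_summable[OF assms(3)]]) auto
  then show ?thesis
    using assms suminf_le[of f g] sums_unique[OF assms(3)] sums_summable[OF assms(3)] by auto
qed

section \<open>Tail sums dominated by q^(k+1) / (1 - q^(k+1))\<close>

lemma geometric_ratio_le: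
  fixes q :: real
  assumes "0 < q" "q < 1"
  shows "q ^ Suc (Suc k) / (1 - q ^ Suc (Suc k)) \<le> q\<^sup>2 / (1 - q\<^sup>2) * q ^ k"
proof -
  have "q ^ Suc (Suc k) \<le> q\<^sup>2"
    using assms by (intro power_decreasing) auto
  moreover have "q\<^sup>2 < 1"
    using assms by (simp add: power_less_one_iff)
  ultimately have "q ^ Suc (Suc k) / (1 - q ^ Suc (Suc k)) \<le> q ^ Suc (Suc k) / (1 - q\<^sup>2)"
    using assms by (intro divide_left_mono) auto
  also have "\<dots> = q\<^sup>2 / (1 - q\<^sup>2) * q ^ k"
    by (simp add: power2_eq_square field_simps)
  finally show ?thesis .
qed

lemma large_p_second_moment_estimate:
  fixes p :: real
  assumes "1/4 \<le> p" "p < 1"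
  shows "(1 - p)\<^sup>2 / (1 - (1 - p)\<^sup>2) * ((2 - p) / p\<^sup>2 + 2 / p) \<le> 3.3 / p\<^sup>2 + 3 / (2 * p) + 1"
proof -
  have rational_form: "(1 - p)\<^sup>2 / (1 - (1 - p)\<^sup>2) * ((2 - p) / p\<^sup>2 + 2 / p)
      = (1 - p)\<^sup>2 * (2 + p) / (p ^ 3 * (2 - p))"
    using assms by (simp add: field_simps power2_eq_square power3_eq_cube)
  have "(1 - p)\<^sup>2 * (2 + p) \<le> (3.3 * p + 1.5 * p\<^sup>2 + p ^ 3) * (2 - p)"
  proof -
    have "0 \<le> (p - 1/4) * (1 - p)"
      using assms by simp
    moreover have "(p - 1/4) * (1 - p) = 5/4 * p - 1/4 - p\<^sup>2"
      by (simp add: power2_eq_square field_simps)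
    ultimately have "p\<^sup>2 \<le> 5/4 * p - 1/4"
      by linarith
    moreover have "p ^ 3 \<le> p\<^sup>2" "p ^ 4 \<le> p\<^sup>2"
      using assms by (intro power_decreasing; simp)+
    moreover have "(3.3 * p + 1.5 * p\<^sup>2 + p ^ 3) * (2 - p) - (1 - p)\<^sup>2 * (2 + p)
        = -2 + 9.6 * p - 0.3 * p\<^sup>2 - 0.5 * p ^ 3 - p ^ 4"
      by (simp add: power2_eq_square power3_eq_cube power4_eq_xxxx) algebra
    ultimately show ?thesis
      using assms by linarith
  qed
  then have "(1 - p)\<^sup>2 * (2 + p) / (p ^ 3 * (2 - p)) \<le> (3.3 * p + 1.5 * p\<^sup>2 + p ^ 3) * (2 - p) / (p ^ 3 * (2 - p))"
    using assms by (intro divide_right_mono) auto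
  also have "\<dots> = 3.3 / p\<^sup>2 + 3 / (2 * p) + 1"
    using assms by (simp add: field_simps power2_eq_square power3_eq_cube)
  finally show ?thesis
    unfolding rational_form .
qed

lemma tail_sum_le_large_p:
  fixes p :: real and P :: "nat \<Rightarrow> real"
  assumes p: "1/4 \<le> p" "p < 1"
    and P_nonneg: "\<And>k. 0 \<le> P k" and P_le_one: "\<And>k. P k \<le> 1"
    and P_le: "\<And>k. P k \<le> (1 - p) ^ Suc k / (1 - (1 - p) ^ Suc k)"
  shows "summable P \<and> suminf P \<le> 1.5 / p + 1"
proof -
  define q where "q = 1 - p"
  define c where "c = q\<^sup>2 / (1 - q\<^sup>2)"
  have q: "0 < q" "q \<le> 3/4"
    using p by (auto simp: q_def)
  have "q\<^sup>2 \<le> (3/4)\<^sup>2"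
    using q by (intro power_mono) auto
  then have c: "0 \<le> c" "c \<le> 3/2"
    by (auto simp: c_def power2_eq_square divide_le_eq)
  define g where "g k = (case k of 0 \<Rightarrow> 1 | Suc j \<Rightarrow> c * q ^ j)" for k
  have "(\<lambda>j. c * q ^ j) sums (c * (1 / (1 - q)))"
    using q by (intro sums_mult geometric_sums) auto
  then have "(\<lambda>j. g (Suc j)) sums (c * (1 / (1 - q)))"
    by (simp add: g_def)
  then have "g sums (c / p + 1)"
    unfolding sums_Suc_iff by (simp add: g_def q_def)
  moreover have "P k \<le> g k" for k
  proof (cases k)
    case (Suc j)
    have "q < 1"
      using p by (simp add: q_def)
    have "P (Suc j) \<le> q ^ Suc (Suc j) / (1 - q ^ Suc (Suc j))"
      unfolding q_def by (rule P_le)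
    also have "\<dots> \<le> c * q ^ j"
      unfolding c_def using q \<open>q < 1\<close> by (intro geometric_ratio_le) auto
    finally show ?thesis
      using Suc by (simp add: g_def)
  qed (use P_le_one in \<open>simp add: g_def\<close>)
  moreover have "c / p + 1 \<le> 1.5 / p + 1"
    using c p by (simp add: divide_right_mono field_simps)
  ultimately show ?thesis
    using summable_suminf_le_sums[of P g] P_nonneg by force
qed

lemma weighted_tail_sum_le_large_p:
  fixes p :: real and P :: "nat \<Rightarrow> real"
  assumes p: "1/4 \<le> p" "p < 1"
    and P_nonneg: "\<And>k. 0 \<le> P k" and P_le_one: "\<And>k. P k \<le> 1"
    and P_le: "\<And>k. P k \<le> (1 - p) ^ Suc k / (1 - (1 - p) ^ Suc k)"
  shows "summable (\<lambda>k. (2 * real k + 1) * P k) \<and>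
    (\<Sum>k. (2 * real k + 1) * P k) \<le> 3.3 / p\<^sup>2 + 3 / (2 * p) + 2"
proof -
  define q where "q = 1 - p"
  define c where "c = q\<^sup>2 / (1 - q\<^sup>2)"
  have q: "0 < q" "q < 1"
    using p by (auto simp: q_def)
  define h where "h k = (case k of 0 \<Rightarrow> 1 | Suc j \<Rightarrow> c * ((2 * real j + 1) * q ^ j + 2 * q ^ j))" for k
  have "(\<lambda>j. c * ((2 * real j + 1) * q ^ j + 2 * q ^ j)) sums (c * ((1 + q) / (1 - q)\<^sup>2 + 2 * (1 / (1 - q))))"
    using q by (intro sums_mult sums_add sums_odd_mult_power geometric_sums) auto
  then have "(\<lambda>j. h (Suc j)) sums (c * ((1 + q) / (1 - q)\<^sup>2 + 2 * (1 / (1 - q))))"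
    by (simp add: h_def)
  then have "h sums (c * ((2 - p) / p\<^sup>2 + 2 / p) + 1)"
    unfolding sums_Suc_iff by (simp add: h_def q_def)
  moreover have "(2 * real k + 1) * P k \<le> h k" for k
  proof (cases k)
    case (Suc j)
    have "(2 * real k + 1) * P k \<le> (2 * real k + 1) * (c * q ^ j)"
      using P_le[of k] geometric_ratio_le[OF q, of j] Suc by (intro mult_left_mono) (auto simp: c_def q_def)
    then show ?thesis
      using Suc by (simp add: h_def algebra_simps)
  qed (use P_le_one in \<open>simp add: h_def\<close>)
  moreover have "c * ((2 - p) / p\<^sup>2 + 2 / p) + 1 \<le> 3.3 / p\<^sup>2 + 3 / (2 * p) + 2"
    using large_p_second_moment_estimate[OF p] by (simp add: c_def q_def)
  ultimately show ?thesis
    using summable_suminf_le_sums[of "\<lambda>k. (2 * real k + 1) * P k" h] P_nonneg by force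
qed

text \<open>\<open>log_tail q j\<close> is the integral of \<open>q\<^sup>t / (1 - q\<^sup>t)\<close> over \<open>t \<ge> j\<close>, which dominates
  the corresponding tail sum and is sharp enough for small \<open>p = 1 - q\<close>.\<close>

definition log_tail :: "real \<Rightarrow> nat \<Rightarrow> real" where
  "log_tail q j = ln (1 - q ^ j) / ln q"

lemma log_tail_nonneg:
  assumes "0 < q" "q < 1" "1 \<le> j"
  shows "0 \<le> log_tail q j"
proof -
  have "0 < q ^ j" "q ^ j < 1"
    using assms by (auto simp: power_less_one_iff)
  then have "ln (1 - q ^ j) \<le> 0"
    by simp
  then show ?thesis
    using assms by (simp add: log_tail_def divide_nonpos_neg)
qed

lemma log_tail_telescope_sums:
  assumes "0 < q" "q < 1"
  shows "(\<lambda>j. log_tail q (j + m) - log_tail q (Suc j + m)) sums log_tail q m"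
proof -
  have "(\<lambda>j. q ^ (j + m)) \<longlonglongrightarrow> 0"
    using LIMSEQ_power_zero[of q] assms by (intro LIMSEQ_ignore_initial_segment) auto
  then have "(\<lambda>j. log_tail q (j + m)) \<longlonglongrightarrow> ln (1 - 0) / ln q"
    unfolding log_tail_def using assms by (intro tendsto_intros) auto
  then show ?thesis
    using telescope_sums'[of "\<lambda>j. log_tail q (j + m)" 0] by simp
qed

lemma ratio_le_log_tail_diff:
  assumes q: "0 < q" "q < 1" and j: "1 \<le> j"
  shows "q ^ Suc j / (1 - q ^ Suc j) \<le> log_tail q j - log_tail q (Suc j)"
proof -
  define a where "a = q ^ j"
  define b where "b = q ^ Suc j"
  have ab: "0 < b" "b < a" "a < 1" "b = q * a"
    using q j by (auto simp: a_def b_def power_less_one_iff)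
  have "(1 - q) * a / (1 - b) = 1 - 1 / ((1 - b) / (1 - a))"
    using ab by (simp add: field_simps)
  also have "\<dots> \<le> ln ((1 - b) / (1 - a))"
    using ln_le_minus_one[of "(1 - a) / (1 - b)"] ab by (simp add: ln_div)
  also have "\<dots> = ln (1 - b) - ln (1 - a)"
    using ab by (simp add: ln_div)
  finally have log_step: "(1 - q) * a / (1 - b) \<le> ln (1 - b) - ln (1 - a)" .
  have "- ln q \<le> (1 - q) / q"
    using ln_le_minus_one[of "1 / q"] q by (simp add: ln_div field_simps)
  then have "- ln q * (b / (1 - b)) \<le> (1 - q) / q * (b / (1 - b))"
    using ab by (intro mult_right_mono) auto
  also have "\<dots> = (1 - q) * a / (1 - b)"
    using ab q by simp
  finally have "- ln q * (b / (1 - b)) \<le> ln (1 - b) - ln (1 - a)"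
    using log_step by linarith
  moreover have "0 < - ln q"
    using q by simp
  ultimately have "b / (1 - b) \<le> (ln (1 - b) - ln (1 - a)) / - ln q"
    by (simp add: field_simps)
  then show ?thesis
    by (simp add: log_tail_def a_def b_def diff_divide_distrib)
qed

lemma tail_sum_le_log_tail:
  fixes P :: "nat \<Rightarrow> real"
  assumes q: "0 < q" "q < 1" and m: "1 \<le> m"
    and P_nonneg: "\<And>k. 0 \<le> P k" and P_le_one: "\<And>k. P k \<le> 1"
    and P_le: "\<And>k. P k \<le> q ^ Suc k / (1 - q ^ Suc k)"
  shows "summable P \<and> suminf P \<le> real m + log_tail q m"
proof -
  define d where "d k = (if k < m then 1 else log_tail q k - log_tail q (Suc k))" for k
  have "(\<lambda>j. d (j + m)) sums log_tail q m"
    using log_tail_telescope_sums[OF q] by (simp add: d_def)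
  moreover have "(\<Sum>k<m. d k) = real m"
    by (simp add: d_def)
  ultimately have "d sums (log_tail q m + real m)"
    using sums_iff_shift[of d m] by simp
  moreover have "P k \<le> d k" for k
    using P_le_one[of k] P_le[of k] ratio_le_log_tail_diff[OF q, of k] m
    by (auto simp: d_def simp del: power_Suc)
  ultimately show ?thesis
    using summable_suminf_le_sums[of P d] P_nonneg by (simp add: add.commute)
qed

lemma ratio_le_of_le_half:
  fixes y s :: real
  assumes "0 \<le> y" "y \<le> s / 2" "s \<le> 1"
  shows "y / (1 - y) \<le> (s + s\<^sup>2) / 2"
proof -
  have "y \<le> 1/2"
    using assms by simp
  then have "0 \<le> y\<^sup>2 * (1 - 2 * y)"
    by simp
  moreover have "(y + 2 * y\<^sup>2) * (1 - y) = y + y\<^sup>2 * (1 - 2 * y)"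
    by (simp add: power2_eq_square algebra_simps)
  ultimately have "y \<le> (y + 2 * y\<^sup>2) * (1 - y)"
    by linarith
  then have "y / (1 - y) \<le> y + 2 * y\<^sup>2"
    using \<open>y \<le> 1/2\<close> by (simp add: divide_le_eq)
  also have "\<dots> \<le> s / 2 + 2 * (s / 2)\<^sup>2"
    using assms by (intro add_mono mult_left_mono power_mono) auto
  also have "\<dots> = (s + s\<^sup>2) / 2"
    by (simp add: power2_eq_square)
  finally show ?thesis .
qed

lemma weighted_ratio_le_log_tail:
  fixes q :: real
  assumes q: "0 < q" "q < 1" and m: "1 \<le> m" "q ^ Suc m \<le> 1/2" and k: "m \<le> k"
  shows "(2 * real k + 1) * (q ^ Suc k / (1 - q ^ Suc k))
    \<le> 2 * real m * (log_tail q k - log_tail q (Suc k))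
      + (2 * real (k - m) + 1) * ((q ^ (k - m) + (q\<^sup>2) ^ (k - m)) / 2)"
proof -
  define j where "j = k - m"
  define y where "y = q ^ Suc k"
  have k: "k = m + j" "1 \<le> k"
    using k m by (auto simp: j_def)
  have "y = q ^ Suc m * q ^ j"
    by (simp add: y_def k(1) power_add)
  also have "\<dots> \<le> 1/2 * q ^ j"
    using m q by (intro mult_right_mono) auto
  finally have "y / (1 - y) \<le> (q ^ j + (q ^ j)\<^sup>2) / 2"
    using q by (intro ratio_le_of_le_half) (auto simp: y_def power_le_one)
  then have y_le: "y / (1 - y) \<le> (q ^ j + (q\<^sup>2) ^ j) / 2"
    by (simp add: power_mult[symmetric] mult.commute)
  have "(2 * real k + 1) * (y / (1 - y)) = 2 * real m * (y / (1 - y)) + (2 * real j + 1) * (y / (1 - y))"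
    by (simp add: k(1) algebra_simps)
  also have "\<dots> \<le> 2 * real m * (log_tail q k - log_tail q (Suc k))
      + (2 * real j + 1) * ((q ^ j + (q\<^sup>2) ^ j) / 2)"
    using ratio_le_log_tail_diff[OF q k(2)] y_le
    by (intro add_mono mult_left_mono) (auto simp: y_def)
  finally show ?thesis
    by (simp add: y_def j_def)
qed

lemma weighted_tail_sum_le_log_tail:
  fixes P :: "nat \<Rightarrow> real"
  assumes q: "0 < q" "q < 1" and m: "1 \<le> m" "q ^ Suc m \<le> 1/2"
    and P_nonneg: "\<And>k. 0 \<le> P k" and P_le_one: "\<And>k. P k \<le> 1"
    and P_le: "\<And>k. P k \<le> q ^ Suc k / (1 - q ^ Suc k)"
  shows "summable (\<lambda>k. (2 * real k + 1) * P k) \<and>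
    (\<Sum>k. (2 * real k + 1) * P k)
      \<le> real m ^ 2 + 2 * real m * log_tail q m + ((1 + q) / (1 - q)\<^sup>2 + (1 + q\<^sup>2) / (1 - q\<^sup>2)\<^sup>2) / 2"
proof -
  define e where "e k = (if k < m then 2 * real k + 1 else
      2 * real m * (log_tail q k - log_tail q (Suc k))
      + (2 * real (k - m) + 1) * ((q ^ (k - m) + (q\<^sup>2) ^ (k - m)) / 2))" for k
  have "(2 * real k + 1) * P k \<le> e k" for k
  proof (cases "k < m")
    case False
    have "(2 * real k + 1) * P k \<le> (2 * real k + 1) * (q ^ Suc k / (1 - q ^ Suc k))"
      using P_le[of k] by (intro mult_left_mono) auto
    also have "\<dots> \<le> e k"
      using weighted_ratio_le_log_tail[OF q m, of k] False by (simp add: e_def)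
    finally show ?thesis .
  qed (use P_le_one in \<open>simp add: e_def\<close>)
  moreover have "e sums (2 * real m * log_tail q m
      + ((1 + q) / (1 - q)\<^sup>2 + (1 + q\<^sup>2) / (1 - q\<^sup>2)\<^sup>2) / 2 + real m ^ 2)"
  proof -
    have "\<bar>q\<^sup>2\<bar> < 1"
      using q by (simp add: power_less_one_iff)
    then have "(\<lambda>j. 2 * real m * (log_tail q (j + m) - log_tail q (Suc j + m))
        + ((2 * real j + 1) * q ^ j + (2 * real j + 1) * (q\<^sup>2) ^ j) / 2)
      sums (2 * real m * log_tail q m + ((1 + q) / (1 - q)\<^sup>2 + (1 + q\<^sup>2) / (1 - q\<^sup>2)\<^sup>2) / 2)"
      using q by (intro sums_add sums_mult sums_divide log_tail_telescope_sums sums_odd_mult_power) auto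
    then have "(\<lambda>j. e (j + m))
      sums (2 * real m * log_tail q m + ((1 + q) / (1 - q)\<^sup>2 + (1 + q\<^sup>2) / (1 - q\<^sup>2)\<^sup>2) / 2)"
      by (simp add: e_def algebra_simps add_divide_distrib)
    moreover have "(\<Sum>k<m. e k) = real m ^ 2"
      using sum_odd_eq_square[of m] by (simp add: e_def)
    ultimately show ?thesis
      using sums_iff_shift[of e m] by simp
  qed
  ultimately show ?thesis
    using summable_suminf_le_sums[of "\<lambda>k. (2 * real k + 1) * P k" e] P_nonneg
    by (simp add: algebra_simps)
qed

lemma exists_halving_exponent:
  fixes q :: real
  assumes "1/2 < q" "q < 1"
  shows "\<exists>m\<ge>1. 1/2 < q ^ m \<and> q ^ Suc m \<le> 1/2"
proof -
  obtain n where "q ^ n < 1/2"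
    using real_arch_pow_inv[of "1/2" q] assms by auto
  then obtain m where m: "\<forall>i\<le>m. \<not> q ^ i \<le> 1/2" "q ^ Suc m \<le> 1/2"
    using ex_least_nat_less[of "\<lambda>k. q ^ k \<le> 1/2" n] by auto
  have "m \<noteq> 0"
    using m(2) assms by (intro notI) simp
  then show ?thesis
    using m by (intro exI[of _ m]) auto
qed

lemma neg_ln_mult_one_minus_le:
  fixes q x :: real
  assumes q: "3/4 < q" "q < 1" and x: "1/2 < x" "q * x \<le> 1/2"
  shows "- ln (x * (1 - x)) \<le> 25/18 + 2 * (1 - q)\<^sup>2"
proof -
  define y where "y = 1 / (2 * q)"
  have y: "x \<le> y" "1/2 \<le> y"
    using x q by (auto simp: y_def field_simps)
  have "0 \<le> (y - x) * (x + y - 1)"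
    using x y by (intro mult_nonneg_nonneg) auto
  then have "y * (1 - y) \<le> x * (1 - x)"
    by (simp add: algebra_simps)
  moreover have "0 < y * (1 - y)"
    using q by (simp add: y_def field_simps)
  ultimately have "- ln (x * (1 - x)) \<le> - ln (y * (1 - y))"
    by simp
  also have "\<dots> = ln 4 + ln (q\<^sup>2 / (2 * q - 1))"
  proof -
    have "y * (1 - y) = 1 / (4 * (q\<^sup>2 / (2 * q - 1)))"
      using q by (simp add: y_def field_simps power2_eq_square)
    then show ?thesis
      using q by (simp add: ln_div ln_mult_pos)
  qed
  also have "\<dots> \<le> 25/18 + 2 * (1 - q)\<^sup>2"
  proof -
    have "ln (4 :: real) = 2 * ln 2"
      using ln_realpow[of 2 2] by simp
    then have "ln (4 :: real) \<le> 25/18"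
      using ln2_le_25_over_36 by simp
    moreover have "ln (q\<^sup>2 / (2 * q - 1)) \<le> q\<^sup>2 / (2 * q - 1) - 1"
      using q by (intro ln_le_minus_one) auto
    moreover have "q\<^sup>2 / (2 * q - 1) - 1 = (1 - q)\<^sup>2 / (2 * q - 1)"
      using q by (simp add: field_simps power2_eq_square)
    moreover have "(1 - q)\<^sup>2 / (2 * q - 1) \<le> 2 * (1 - q)\<^sup>2"
      using q by (simp add: divide_le_eq)
    ultimately show ?thesis
      by linarith
  qed
  finally show ?thesis .
qed

lemma log_tail_threshold_le:
  fixes q :: real
  assumes q: "3/4 < q" "q < 1" and m: "1/2 < q ^ m" "q ^ Suc m \<le> 1/2"
  shows "real m + log_tail q m \<le> (25/18 + 2 * (1 - q)\<^sup>2) / (1 - q)"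
proof -
  define C where "C = 25/18 + 2 * (1 - q)\<^sup>2"
  have "q ^ m < 1"
  proof (rule ccontr)
    assume "\<not> q ^ m < 1"
    then have "q * 1 \<le> q * q ^ m"
      using q by (intro mult_left_mono) auto
    moreover have "q * q ^ m \<le> 1/2"
      using m(2) by simp
    ultimately show False
      using q by linarith
  qed
  have "- ln q * (real m + log_tail q m) = - ln (q ^ m) - ln (1 - q ^ m)"
    using q by (simp add: log_tail_def ln_realpow algebra_simps)
  also have "\<dots> = - ln (q ^ m * (1 - q ^ m))"
    using q \<open>q ^ m < 1\<close> by (simp add: ln_mult_pos)
  also have "\<dots> \<le> C"
    unfolding C_def using q m by (intro neg_ln_mult_one_minus_le) auto
  finally have "real m + log_tail q m \<le> C / - ln q"
    using q by (simp add: field_simps)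
  also have "\<dots> \<le> C / (1 - q)"
    using ln_le_minus_one[of q] q by (intro divide_left_mono) (auto simp: C_def mult_neg_pos)
  finally show ?thesis
    by (simp add: C_def)
qed

lemma mean_odd_geometric_sums_eq:
  fixes p q :: real
  assumes p: "0 < p" "p < 1" and q_def: "q = 1 - p"
  shows "((1 + q) / (1 - q)\<^sup>2 + (1 + q\<^sup>2) / (1 - q\<^sup>2)\<^sup>2) / 2
    = ((1 + q) / 2 + (1 + q\<^sup>2) / (2 * (1 + q)\<^sup>2)) / p\<^sup>2"
proof -
  have q: "0 < q" "q < 1"
    using p by (auto simp: q_def)
  have "1 - q\<^sup>2 = p * (1 + q)"
    by (simp add: q_def power2_eq_square algebra_simps)
  then have "(1 - q\<^sup>2)\<^sup>2 = p\<^sup>2 * (1 + q)\<^sup>2"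
    by (simp add: power_mult_distrib)
  moreover have "(1 - q)\<^sup>2 = p\<^sup>2"
    by (simp add: q_def)
  ultimately have "((1 + q) / (1 - q)\<^sup>2 + (1 + q\<^sup>2) / (1 - q\<^sup>2)\<^sup>2) / 2
      = ((1 + q) / p\<^sup>2 + (1 + q\<^sup>2) / (p\<^sup>2 * (1 + q)\<^sup>2)) / 2"
    by (simp only:)
  also have "\<dots> = ((1 + q) / 2 + (1 + q\<^sup>2) / (2 * (1 + q)\<^sup>2)) / p\<^sup>2"
    using p q by (simp add: field_simps)
  finally show ?thesis .
qed

lemma small_p_second_moment_estimate:
  fixes p q :: real
  assumes p: "0 < p" "p < 1/4" and q_def: "q = 1 - p"
  shows "((25/18 + 2 * p\<^sup>2) / p)\<^sup>2 + ((1 + q) / (1 - q)\<^sup>2 + (1 + q\<^sup>2) / (1 - q\<^sup>2)\<^sup>2) / 2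
    \<le> 3.3 / p\<^sup>2 + 3 / (2 * p) + 2"
proof -
  define C where "C = 25/18 + 2 * p\<^sup>2"
  have q: "3/4 < q" "q < 1"
    using p by (auto simp: q_def)
  have R_eq: "((1 + q) / (1 - q)\<^sup>2 + (1 + q\<^sup>2) / (1 - q\<^sup>2)\<^sup>2) / 2
      = ((1 + q) / 2 + (1 + q\<^sup>2) / (2 * (1 + q)\<^sup>2)) / p\<^sup>2"
    using p by (intro mean_odd_geometric_sums_eq q_def) auto
  have "(1 + q\<^sup>2) / (2 * (1 + q)\<^sup>2) \<le> 13/50"
  proof -
    have "0 \<le> (q - 3/4) * (1 - q)"
      using q by simp
    moreover have "(q - 3/4) * (1 - q) = 7/4 * q - 3/4 - q\<^sup>2"
      by (simp add: power2_eq_square field_simps)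
    moreover have "(1 + q)\<^sup>2 = 1 + 2 * q + q\<^sup>2"
      by (simp add: power2_eq_square algebra_simps)
    ultimately have "1 + q\<^sup>2 \<le> 13/50 * (2 * (1 + q)\<^sup>2)"
      using q by linarith
    then show ?thesis
      using q by (simp add: divide_le_eq)
  qed
  moreover have "C\<^sup>2 + (1 + q) / 2 + 13/50 \<le> 3.3 + 1.5 * p + 2 * p\<^sup>2"
  proof -
    have "C\<^sup>2 = 625/324 + 50/9 * p\<^sup>2 + 4 * p ^ 4"
      by (simp add: C_def power2_eq_square power4_eq_xxxx algebra_simps)
    moreover have "p\<^sup>2 \<le> p / 4"
      using p by (simp add: power2_eq_square)
    moreover have "p ^ 4 \<le> p\<^sup>2"
      using p by (intro power_decreasing) auto
    ultimately show ?thesis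
      unfolding q_def using p by (simp add: field_simps, insert zero_le_power2[of p], linarith)
  qed
  ultimately have "C\<^sup>2 + ((1 + q) / 2 + (1 + q\<^sup>2) / (2 * (1 + q)\<^sup>2)) \<le> 3.3 + 1.5 * p + 2 * p\<^sup>2"
    by linarith
  then have "C\<^sup>2 / p\<^sup>2 + ((1 + q) / 2 + (1 + q\<^sup>2) / (2 * (1 + q)\<^sup>2)) / p\<^sup>2
      \<le> (3.3 + 1.5 * p + 2 * p\<^sup>2) / p\<^sup>2"
    unfolding add_divide_distrib[symmetric] by (intro divide_right_mono) auto
  also have "\<dots> = 3.3 / p\<^sup>2 + 3 / (2 * p) + 2"
    using p by (simp add: field_simps power2_eq_square)
  finally show ?thesis
    unfolding R_eq by (simp add: C_def power_divide)
qed

lemma tail_sums_le_small_p: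
  fixes p :: real and P :: "nat \<Rightarrow> real"
  assumes p: "0 < p" "p < 1/4"
    and P_nonneg: "\<And>k. 0 \<le> P k" and P_le_one: "\<And>k. P k \<le> 1"
    and P_le: "\<And>k. P k \<le> (1 - p) ^ Suc k / (1 - (1 - p) ^ Suc k)"
  shows "summable P \<and> suminf P \<le> 1.5 / p + 1"
    and "summable (\<lambda>k. (2 * real k + 1) * P k) \<and>
      (\<Sum>k. (2 * real k + 1) * P k) \<le> 3.3 / p\<^sup>2 + 3 / (2 * p) + 2"
proof -
  define q where "q = 1 - p"
  define C where "C = 25/18 + 2 * p\<^sup>2"
  have q: "3/4 < q" "q < 1" "0 < q"
    using p by (auto simp: q_def)
  obtain m where m: "1 \<le> m" "1/2 < q ^ m" "q ^ Suc m \<le> 1/2"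
    using exists_halving_exponent[of q] q by auto
  have mass: "real m + log_tail q m \<le> C / p"
    using log_tail_threshold_le[OF q(1,2) m(2,3)] by (simp add: C_def q_def)
  have P_le': "P k \<le> q ^ Suc k / (1 - q ^ Suc k)" for k
    using P_le by (simp add: q_def)
  have "C / p \<le> 1.5 / p + 1"
  proof -
    have "p\<^sup>2 \<le> p / 4"
      using p by (simp add: power2_eq_square)
    then have "C / p \<le> (1.5 + p) / p"
      using p by (intro divide_right_mono) (auto simp: C_def)
    then show ?thesis
      using p by (simp add: add_divide_distrib)
  qed
  then show "summable P \<and> suminf P \<le> 1.5 / p + 1"
    using tail_sum_le_log_tail[OF q(3,2) m(1) P_nonneg P_le_one P_le'] mass by linarith
  have "0 \<le> log_tail q m"
    using q m by (intro log_tail_nonneg) auto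
  then have "real m ^ 2 + 2 * real m * log_tail q m \<le> (real m + log_tail q m)\<^sup>2"
    by (simp add: power2_eq_square algebra_simps)
  also have "\<dots> \<le> (C / p)\<^sup>2"
    using mass \<open>0 \<le> log_tail q m\<close> by (intro power_mono) auto
  finally show "summable (\<lambda>k. (2 * real k + 1) * P k) \<and>
      (\<Sum>k. (2 * real k + 1) * P k) \<le> 3.3 / p\<^sup>2 + 3 / (2 * p) + 2"
    using weighted_tail_sum_le_log_tail[OF q(3,2) m(1,3) P_nonneg P_le_one P_le']
      small_p_second_moment_estimate[OF p q_def]
    unfolding C_def by linarith
qed

lemma tail_sums_le:
  fixes p :: real and P :: "nat \<Rightarrow> real"
  assumes p: "0 < p" "p < 1"
    and P_nonneg: "\<And>k. 0 \<le> P k" and P_le_one: "\<And>k. P k \<le> 1"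
    and P_le: "\<And>k. P k \<le> (1 - p) ^ Suc k / (1 - (1 - p) ^ Suc k)"
  shows "summable P \<and> suminf P \<le> 1.5 / p + 1"
    and "summable (\<lambda>k. (2 * real k + 1) * P k) \<and>
      (\<Sum>k. (2 * real k + 1) * P k) \<le> 3.3 / p\<^sup>2 + 3 / (2 * p) + 2"
  using tail_sums_le_small_p[OF p(1) _ P_nonneg P_le_one P_le]
    tail_sum_le_large_p[OF _ p(2) P_nonneg P_le_one P_le]
    weighted_tail_sum_le_large_p[OF _ p(2) P_nonneg P_le_one P_le]
  by (cases "p < 1/4"; simp)+

lemma corrected_lower_bounds:
  fixes p :: real
  assumes p: "0 < p" "p < 1" and n: "1 \<le> n"
  shows "(1 - p)\<^sup>2 / p - (1 - p) ^ (2 * n) / (1 - (1 - p) ^ n) \<le> (1 - p)\<^sup>2 / p"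
    and "2 * (1 - p)\<^sup>2 / p\<^sup>2 - 2 * (1 - p) ^ (2 * n) / (1 - (1 - p) ^ n)\<^sup>2 \<le> 2 * (1 - p)\<^sup>2 / p\<^sup>2"
    and "0 \<le> (1 - p)\<^sup>2 / p - (1 - p) ^ (2 * n) / (1 - (1 - p) ^ n)"
proof -
  have "(1 - p) ^ n \<le> (1 - p) ^ 1"
    using p n by (intro power_decreasing) auto
  then have "p \<le> 1 - (1 - p) ^ n"
    by simp
  then show "(1 - p)\<^sup>2 / p - (1 - p) ^ (2 * n) / (1 - (1 - p) ^ n) \<le> (1 - p)\<^sup>2 / p"
    and "2 * (1 - p)\<^sup>2 / p\<^sup>2 - 2 * (1 - p) ^ (2 * n) / (1 - (1 - p) ^ n)\<^sup>2 \<le> 2 * (1 - p)\<^sup>2 / p\<^sup>2"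
    using p by simp_all
  have "(1 - p) ^ (2 * n) \<le> (1 - p)\<^sup>2"
    using p n by (intro power_decreasing) auto
  with \<open>p \<le> 1 - (1 - p) ^ n\<close> have "(1 - p) ^ (2 * n) / (1 - (1 - p) ^ n) \<le> (1 - p)\<^sup>2 / p"
    using p by (intro frac_le) auto
  then show "0 \<le> (1 - p)\<^sup>2 / p - (1 - p) ^ (2 * n) / (1 - (1 - p) ^ n)"
    by simp
qed

lemma second_moment_bound_minus_square_le:
  fixes p :: real
  assumes "0 < p"
  shows "3.3 / p\<^sup>2 + 3 / (2 * p) + 2 - ((1 - p)\<^sup>2 / p)\<^sup>2 \<le> 2.3 / p\<^sup>2 + 5.5 / p"
proof -
  have "3.3 / p\<^sup>2 + 3 / (2 * p) + 2 - ((1 - p)\<^sup>2 / p)\<^sup>2 = 2.3 / p\<^sup>2 + 5.5 / p - (2 - p)\<^sup>2"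
    using assms by (simp add: field_simps power2_eq_square power4_eq_xxxx)
  then show ?thesis
    by simp
qed

section \<open>Longest gaps\<close>

lemma finite_gap_lengths: "finite (gap_lengths S)"
proof -
  have "gap_lengths S \<subseteq> {..Suc (Max S)}"
    unfolding gap_lengths_def by auto
  then show ?thesis
    by (rule finite_subset) simp
qed

lemma gap_length_le_longest_gap: "g \<in> gap_lengths S \<Longrightarrow> g \<le> longest_gap S"
  unfolding longest_gap_def by (intro Max_ge) (auto simp: finite_gap_lengths)

lemma longest_gap_in_gap_lengths: "longest_gap S \<in> insert 0 (gap_lengths S)"
  unfolding longest_gap_def using Max_in[of "{0} \<union> gap_lengths S"] by (simp add: finite_gap_lengths)

lemma longest_gap_singleton: "longest_gap {x} = 0"
proof -
  have "gap_lengths {x} = {}"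
    by (force simp: gap_lengths_def)
  then show ?thesis
    by (simp add: longest_gap_def)
qed

lemma longest_gap_ge_imp_window:
  assumes S: "finite S" "S \<noteq> {}" and k: "1 \<le> k" "k \<le> longest_gap S"
  shows "\<exists>a\<ge>1. a - 1 \<in> S \<and> (\<forall>s\<in>S. s \<notin> {a..<a + k}) \<and> (\<exists>s\<in>S. a + k \<le> s)"
proof -
  have "longest_gap S \<in> gap_lengths S"
    using longest_gap_in_gap_lengths[of S] k by auto
  then obtain a b where gap: "longest_gap S = b - a + 1" "Min S \<le> a" "a \<le> b"
      "{a..b} \<inter> S = {}" "a - 1 \<in> S" "b + 1 \<in> S"
    unfolding gap_lengths_def by blast
  have "Min S \<in> S" "a \<notin> S"
    using S gap(3,4) by auto
  then have "1 \<le> a"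
    using gap(2) by (cases "Min S = a") auto
  moreover have "{a..<a + k} \<subseteq> {a..b}"
    using gap(1,3) k by auto
  then have "\<forall>s\<in>S. s \<notin> {a..<a + k}"
    using gap(4) by blast
  moreover have "a + k \<le> b + 1"
    using gap(1,3) k by simp
  ultimately show ?thesis
    using gap(5,6) by blast
qed

lemma le_longest_gap_insert:
  assumes S: "finite S" "S \<noteq> {}" and below: "\<forall>s\<in>S. s < w" and k: "1 \<le> k"
  shows "k \<le> longest_gap (insert (w + k) S)"
proof -
  let ?S = "insert (w + k) S"
  define a where "a = Max S + 1"
  define b where "b = w + k - 1"
  have "Max S \<in> S"
    using S by simp
  then have max_less: "Max S < w"
    using below by auto
  have "b - a + 1 \<in> gap_lengths ?S"
    unfolding gap_lengths_def
  proof (intro CollectI exI conjI)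
    have "Min S \<le> a"
      using Min_le[OF S(1) \<open>Max S \<in> S\<close>] by (simp add: a_def)
    then show "Min ?S \<le> a"
      using S by (simp add: min_le_iff_disj)
    show "b \<le> Max ?S"
      using S by (simp add: b_def)
    show "{a..b} \<inter> ?S = {}"
      using S k Max_ge[OF S(1)] by (fastforce simp: a_def b_def)
  qed (use max_less k \<open>Max S \<in> S\<close> in \<open>auto simp: a_def b_def\<close>)
  moreover have "k \<le> b - a + 1"
    using max_less k by (simp add: a_def b_def)
  ultimately show ?thesis
    using gap_length_le_longest_gap le_trans by blast
qed

section \<open>Telescoping estimates for the gap probabilities\<close>

lemma window_step_le:
  fixes q r :: real
  assumes q: "0 < q" "q < 1" and r: "0 \<le> r" "r < 1"
  shows "(1 - q ^ b * (1 - r)) ^ n - (1 - q ^ b * (1 - r) - q ^ b * (1 - q) * r) ^ n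
    \<le> r / (1 - r) * ((1 - q ^ Suc b * (1 - r)) ^ n - (1 - q ^ b * (1 - r)) ^ n)"
proof (rule power_diff_le_scaled_power_diff)
  have "q ^ b * (1 - q * r) \<le> 1"
    using q r by (intro mult_le_one) (auto simp: power_le_one mult_le_one)
  then show "0 \<le> 1 - q ^ b * (1 - r) - q ^ b * (1 - q) * r"
    by (simp add: algebra_simps)
  have "q ^ Suc b \<le> q ^ b"
    using q by (intro power_decreasing) auto
  then show "1 - q ^ b * (1 - r) \<le> 1 - q ^ Suc b * (1 - r)"
    using r by (simp add: mult_right_mono)
  show "q ^ b * (1 - q) * r = r / (1 - r) * (1 - q ^ Suc b * (1 - r) - (1 - q ^ b * (1 - r)))"
    using r by (simp add: field_simps)
qed (use r in simp)

text \<open>With \<open>r = q\<^sup>k\<close>, the \<open>b\<close>-th summand is the probability that a gap of length at least \<open>k\<close>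
  starts at \<open>b + 1\<close> (see \<open>prob_gap_window\<close> below).\<close>

lemma window_sum_le:
  fixes q r :: real
  assumes q: "0 < q" "q < 1" and r: "0 \<le> r" "r < 1" and n: "1 \<le> n"
  defines "F \<equiv> \<lambda>z::real. (1 - z) ^ n"
  shows "(\<Sum>b<N. F (q ^ (b + 1) - q ^ (b + 1) * r) - F (q ^ (b + 1))
      - F (q ^ b - q ^ (b + 1) * r) + F (q ^ b)) \<le> r / (1 - r)"
proof -
  define c where "c = r / (1 - r)"
  define z where "z b = q ^ b * (1 - r)" for b
  define D where "D b = F (z b) - F (q ^ b)" for b
  have c: "0 \<le> c"
    using r by (simp add: c_def)
  have qb: "0 < q ^ b" "q ^ b \<le> 1" for b
    using q by (auto simp: power_le_one)
  have step: "F (z b) - F (z b + q ^ b * (1 - q) * r) \<le> c * (F (z (Suc b)) - F (z b))" for b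
    using window_step_le[OF q r, of b n] by (simp add: F_def z_def c_def algebra_simps)
  have last: "D N \<le> c * (1 - F (z N))"
  proof -
    have "(1 - z N) ^ n - ((1 - z N) - q ^ N * r) ^ n \<le> c * (1 ^ n - (1 - z N) ^ n)"
    proof (rule power_diff_le_scaled_power_diff[OF _ c])
      show "0 \<le> 1 - z N - q ^ N * r" "1 - z N \<le> 1"
        using qb[of N] r by (auto simp: z_def algebra_simps)
      show "q ^ N * r = c * (1 - (1 - z N))"
        using r by (simp add: z_def c_def)
    qed
    then show ?thesis
      by (simp add: D_def F_def z_def algebra_simps)
  qed
  have "(\<Sum>b<N. F (q ^ (b + 1) - q ^ (b + 1) * r) - F (q ^ (b + 1))
      - F (q ^ b - q ^ (b + 1) * r) + F (q ^ b))
      = (\<Sum>b<N. D (Suc b) - D b) + (\<Sum>b<N. F (z b) - F (z b + q ^ b * (1 - q) * r))"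
    unfolding sum.distrib[symmetric] by (intro sum.cong) (auto simp: D_def z_def algebra_simps)
  also have "\<dots> \<le> (D N - D 0) + (\<Sum>b<N. c * (F (z (Suc b)) - F (z b)))"
    by (intro add_mono sum_mono step) (simp add: sum_lessThan_telescope)
  also have "\<dots> = D N - D 0 + c * (F (z N) - F (z 0))"
    by (simp add: sum_distrib_left[symmetric] sum_lessThan_telescope[of "\<lambda>b. F (z b)"])
  also have "\<dots> \<le> c * (1 - r ^ n) - r ^ n"
    using last n by (simp add: D_def F_def z_def algebra_simps power_0_left)
  also have "\<dots> \<le> c"
    using c r by (simp add: algebra_simps)
  finally show ?thesis
    by (simp add: c_def)
qed

lemma telescope_le_shifted_sum:
  fixes G c :: "nat \<Rightarrow> real" and q :: real
  assumes G0: "G 0 = 0" and q: "0 \<le> q" and c_nonneg: "\<And>j. 0 \<le> c j"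
    and step: "\<And>j. G (Suc j) - G j \<le> c j + q * (if j = 0 then 0 else c (j - 1))"
  shows "G W \<le> (1 + q) * (\<Sum>j<W. c j)"
proof -
  define c' where "c' j = (if j = 0 then 0 else c (j - 1))" for j
  have "sum c' {..<W} \<le> sum c {..<W}"
  proof (cases W)
    case (Suc V)
    have "sum c' {..<W} = sum c {..<V}"
      unfolding Suc sum.lessThan_Suc_shift by (simp add: c'_def)
    also have "\<dots> \<le> sum c {..<W}"
      using Suc c_nonneg by (intro sum_mono2) auto
    finally show ?thesis .
  qed simp
  then have "q * sum c' {..<W} \<le> q * sum c {..<W}"
    using q by (intro mult_left_mono) auto
  have "G W = (\<Sum>j<W. G (Suc j) - G j)"
    using G0 by (simp add: sum_lessThan_telescope)
  also have "\<dots> \<le> (\<Sum>j<W. c j + q * c' j)"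
    using step by (intro sum_mono) (simp add: c'_def)
  also have "\<dots> \<le> (1 + q) * sum c {..<W}"
    using \<open>q * sum c' {..<W} \<le> q * sum c {..<W}\<close>
    by (simp add: sum.distrib sum_distrib_left[symmetric] algebra_simps)
  finally show ?thesis .
qed

lemma power_le_trapezoid_sum:
  fixes q :: real
  assumes q: "0 < q" "q < 1" and n: "2 \<le> n"
  shows "2 * (1 - q ^ W) ^ n
    \<le> (1 + q) * (\<Sum>j<W. real n * (q ^ j - q ^ Suc j) * (1 - q ^ Suc j) ^ (n - 1))"
proof (rule telescope_le_shifted_sum)
  define c where "c j = real n * (q ^ j - q ^ Suc j) * (1 - q ^ Suc j) ^ (n - 1)" for j
  have q_pow: "q ^ Suc j \<le> q ^ j" "q ^ j \<le> 1" for j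
    using q by (auto simp: power_le_one intro: power_decreasing)
  show "0 \<le> c j" for j
    using q_pow[of j] q_pow[of "Suc j"] by (simp add: c_def)
  show "2 * (1 - q ^ Suc j) ^ n - 2 * (1 - q ^ j) ^ n \<le> c j + q * (if j = 0 then 0 else c (j - 1))" for j
  proof -
    have "2 * (1 - q ^ Suc j) ^ n - 2 * (1 - q ^ j) ^ n
        \<le> real n * (q ^ j - q ^ Suc j) * ((1 - q ^ Suc j) ^ (n - 1) + (1 - q ^ j) ^ (n - 1))"
      using power_diff_le_trapezoid[of "1 - q ^ j" "1 - q ^ Suc j" n] q_pow[of j] by simp
    also have "\<dots> = c j + q * (if j = 0 then 0 else c (j - 1))"
      using n by (cases j) (simp_all add: c_def algebra_simps power_0_left)
    finally show ?thesis .
  qed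
qed (use q n in auto)

section \<open>Geometric samples\<close>

context prob_space
begin

lemma nn_integral_sum_lessThan:
  fixes X :: "'a \<Rightarrow> nat" and d :: "nat \<Rightarrow> real"
  assumes X: "X \<in> measurable M (count_space UNIV)" and d: "\<And>k. 0 \<le> d k"
  shows "(\<integral>\<^sup>+\<omega>. ennreal (\<Sum>k<X \<omega>. d k) \<partial>M)
    = (\<Sum>k. ennreal (d k) * emeasure M {\<omega> \<in> space M. k < X \<omega>})"
proof -
  have events: "{\<omega> \<in> space M. k < X \<omega>} \<in> events" for k
    using measurable_sets[OF X, of "{k<..}"] by (simp add: vimage_def Int_def conj_commute)
  have "ennreal (\<Sum>k<X \<omega>. d k) = (\<Sum>k. ennreal (d k) * indicator {\<omega> \<in> space M. k < X \<omega>} \<omega>)"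
    if "\<omega> \<in> space M" for \<omega>
  proof -
    have "(\<Sum>k. ennreal (d k) * indicator {\<omega> \<in> space M. k < X \<omega>} \<omega>)
        = (\<Sum>k<X \<omega>. ennreal (d k) * indicator {\<omega> \<in> space M. k < X \<omega>} \<omega>)"
      by (rule suminf_finite) (auto simp: that)
    also have "\<dots> = ennreal (\<Sum>k<X \<omega>. d k)"
      using that d by (simp add: sum_ennreal)
    finally show ?thesis
      by simp
  qed
  then have "(\<integral>\<^sup>+\<omega>. ennreal (\<Sum>k<X \<omega>. d k) \<partial>M)
      = (\<integral>\<^sup>+\<omega>. (\<Sum>k. ennreal (d k) * indicator {\<omega> \<in> space M. k < X \<omega>} \<omega>) \<partial>M)"
    by (intro nn_integral_cong) auto
  also have "\<dots> = (\<Sum>k. \<integral>\<^sup>+\<omega>. ennreal (d k) * indicator {\<omega> \<in> space M. k < X \<omega>} \<omega> \<partial>M)"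
    using events by (intro nn_integral_suminf) auto
  also have "\<dots> = (\<Sum>k. ennreal (d k) * emeasure M {\<omega> \<in> space M. k < X \<omega>})"
    using events by (simp add: nn_integral_cmult_indicator)
  finally show ?thesis .
qed

lemma expectation_sum_lessThan:
  fixes X :: "'a \<Rightarrow> nat" and d :: "nat \<Rightarrow> real"
  assumes X: "X \<in> measurable M (count_space UNIV)" and d: "\<And>k. 0 \<le> d k"
    and summable: "summable (\<lambda>k. d k * prob {\<omega> \<in> space M. k < X \<omega>})"
  shows "integrable M (\<lambda>\<omega>. \<Sum>k<X \<omega>. d k)"
    and "expectation (\<lambda>\<omega>. \<Sum>k<X \<omega>. d k) = (\<Sum>k. d k * prob {\<omega> \<in> space M. k < X \<omega>})"
proof -
  have "(\<integral>\<^sup>+\<omega>. ennreal (\<Sum>k<X \<omega>. d k) \<partial>M) = (\<Sum>k. ennreal (d k * prob {\<omega> \<in> space M. k < X \<omega>}))"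
    using d by (simp add: nn_integral_sum_lessThan[OF X d] emeasure_eq_measure ennreal_mult)
  also have "\<dots> = ennreal (\<Sum>k. d k * prob {\<omega> \<in> space M. k < X \<omega>})"
    using d summable by (intro suminf_ennreal2) auto
  finally have nn: "(\<integral>\<^sup>+\<omega>. ennreal (\<Sum>k<X \<omega>. d k) \<partial>M) = ennreal (\<Sum>k. d k * prob {\<omega> \<in> space M. k < X \<omega>})" .
  have meas: "(\<lambda>\<omega>. \<Sum>k<X \<omega>. d k) \<in> borel_measurable M"
    using measurable_comp[OF X, of "\<lambda>x. \<Sum>k<x. d k" borel] by (simp add: comp_def)
  have nonneg: "0 \<le> (\<Sum>k<x. d k)" for x
    using d by (simp add: sum_nonneg)
  show "integrable M (\<lambda>\<omega>. \<Sum>k<X \<omega>. d k)"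
    using meas nonneg nn by (intro integrableI_nonneg) auto
  have "0 \<le> (\<Sum>k. d k * prob {\<omega> \<in> space M. k < X \<omega>})"
    using d summable by (intro suminf_nonneg) auto
  then show "expectation (\<lambda>\<omega>. \<Sum>k<X \<omega>. d k) = (\<Sum>k. d k * prob {\<omega> \<in> space M. k < X \<omega>})"
    using meas nonneg nn by (simp add: integral_eq_nn_integral)
qed

end

locale iid_geometric = prob_space M for M :: "'a measure" +
  fixes Y :: "nat \<Rightarrow> 'a \<Rightarrow> nat" and p :: real
  assumes p_pos: "0 < p" and p_less_one: "p < 1"
    and indep_Y: "indep_vars (\<lambda>_. count_space UNIV) Y {1..}"
    and prob_Y_eq: "\<And>i k. 1 \<le> i \<Longrightarrow> prob {\<omega> \<in> space M. Y i \<omega> = k} = (1 - p) ^ k * p"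
begin

abbreviation q :: real where
  "q \<equiv> 1 - p"

lemma q_pos: "0 < q" and q_less_one: "q < 1"
  using p_pos p_less_one by auto

lemma measurable_Y: "1 \<le> i \<Longrightarrow> Y i \<in> measurable M (count_space UNIV)"
  using indep_Y unfolding indep_vars_def2 by auto

lemma events_Y: "1 \<le> i \<Longrightarrow> {\<omega> \<in> space M. P (Y i \<omega>)} \<in> events"
  using measurable_sets[OF measurable_Y, of i "{k. P k}"] by (simp add: vimage_def Int_def conj_commute)

lemma prob_Y_less: "1 \<le> i \<Longrightarrow> prob {\<omega> \<in> space M. Y i \<omega> < a} = 1 - q ^ a"
proof (induction a)
  case (Suc a)
  have "{\<omega> \<in> space M. Y i \<omega> < Suc a} = {\<omega> \<in> space M. Y i \<omega> < a} \<union> {\<omega> \<in> space M. Y i \<omega> = a}"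
    by auto
  then have "prob {\<omega> \<in> space M. Y i \<omega> < Suc a}
      = prob {\<omega> \<in> space M. Y i \<omega> < a} + prob {\<omega> \<in> space M. Y i \<omega> = a}"
    using Suc.prems by (auto intro!: finite_measure_Union events_Y)
  then show ?case
    using Suc prob_Y_eq[of i a] by (simp add: algebra_simps)
qed simp

lemma prob_Y_ge:
  assumes "1 \<le> i"
  shows "prob {\<omega> \<in> space M. a \<le> Y i \<omega>} = q ^ a"
proof -
  have "{\<omega> \<in> space M. a \<le> Y i \<omega>} = space M - {\<omega> \<in> space M. Y i \<omega> < a}"
    by auto
  then show ?thesis
    using prob_compl[OF events_Y[OF assms, of "\<lambda>y. y < a"]] prob_Y_less[OF assms] by simp
qed

lemma prob_Y_notin_window:
  assumes "1 \<le> i"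
  shows "prob {\<omega> \<in> space M. Y i \<omega> \<notin> {a..<a + k}} = 1 - q ^ a + q ^ (a + k)"
proof -
  have "{\<omega> \<in> space M. Y i \<omega> \<notin> {a..<a + k}}
      = {\<omega> \<in> space M. Y i \<omega> < a} \<union> {\<omega> \<in> space M. a + k \<le> Y i \<omega>}"
    by auto
  then have "prob {\<omega> \<in> space M. Y i \<omega> \<notin> {a..<a + k}}
      = prob {\<omega> \<in> space M. Y i \<omega> < a} + prob {\<omega> \<in> space M. a + k \<le> Y i \<omega>}"
    using assms by (auto intro!: finite_measure_Union events_Y)
  then show ?thesis
    using prob_Y_less[OF assms] prob_Y_ge[OF assms] by simp
qed

lemma prob_all_Y:
  assumes "finite J" "J \<subseteq> {1..}"
  shows "prob {\<omega> \<in> space M. \<forall>i\<in>J. Y i \<omega> \<in> A i} = (\<Prod>i\<in>J. prob {\<omega> \<in> space M. Y i \<omega> \<in> A i})"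
proof (cases "J = {}")
  case False
  have "prob (\<Inter>i\<in>J. Y i -` A i \<inter> space M) = (\<Prod>i\<in>J. prob (Y i -` A i \<inter> space M))"
    using assms False by (intro indep_varsD[OF indep_Y]) auto
  moreover have "(\<Inter>i\<in>J. Y i -` A i \<inter> space M) = {\<omega> \<in> space M. \<forall>i\<in>J. Y i \<omega> \<in> A i}"
    using False by auto
  ultimately show ?thesis
    by (simp add: vimage_def Int_def conj_commute)
qed (simp add: prob_space)

definition all_Y_in :: "nat \<Rightarrow> nat set \<Rightarrow> 'a set" where
  "all_Y_in n A = {\<omega> \<in> space M. \<forall>i\<in>{1..n}. Y i \<omega> \<in> A}"

lemma events_all_Y_in: "all_Y_in n A \<in> events"
  unfolding all_Y_in_def by (intro sets.sets_Collect_finite_All events_Y) auto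

lemma prob_all_Y_in:
  assumes "\<And>i. 1 \<le> i \<Longrightarrow> prob {\<omega> \<in> space M. Y i \<omega> \<in> A} = c"
  shows "prob (all_Y_in n A) = c ^ n"
  using prob_all_Y[of "{1..n}" "\<lambda>_. A"] assms by (simp add: all_Y_in_def)

lemma all_Y_in_Int: "all_Y_in n A \<inter> all_Y_in n B = all_Y_in n (A \<inter> B)"
  by (auto simp: all_Y_in_def)

lemma measurable_fun_of_Y:
  fixes f :: "(nat \<Rightarrow> nat) \<Rightarrow> nat"
  assumes f: "\<And>y y'. (\<And>i. i \<in> {1..n} \<Longrightarrow> y i = y' i) \<Longrightarrow> f y = f y'"
  shows "(\<lambda>\<omega>. f (\<lambda>i. Y i \<omega>)) \<in> measurable M (count_space UNIV)"
  unfolding measurable_count_space_eq2_countable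
proof (intro conjI ballI)
  fix c :: nat
  let ?T = "{y \<in> Pi\<^sub>E {1..n} (\<lambda>_. UNIV :: nat set). f y = c}"
  have preimage_eq: "(\<lambda>\<omega>. f (\<lambda>i. Y i \<omega>)) -` {c} \<inter> space M = (\<Union>y\<in>?T. {\<omega> \<in> space M. \<forall>i\<in>{1..n}. Y i \<omega> = y i})"
  proof (intro equalityI subsetI)
    fix \<omega> assume \<omega>: "\<omega> \<in> (\<lambda>\<omega>. f (\<lambda>i. Y i \<omega>)) -` {c} \<inter> space M"
    then have "f (restrict (\<lambda>i. Y i \<omega>) {1..n}) = c"
      using f[of "restrict (\<lambda>i. Y i \<omega>) {1..n}" "\<lambda>i. Y i \<omega>"] by simp
    then show "\<omega> \<in> (\<Union>y\<in>?T. {\<omega> \<in> space M. \<forall>i\<in>{1..n}. Y i \<omega> = y i})"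
      using \<omega> by (intro UN_I[of "restrict (\<lambda>i. Y i \<omega>) {1..n}"]) auto
  next
    fix \<omega> assume "\<omega> \<in> (\<Union>y\<in>?T. {\<omega> \<in> space M. \<forall>i\<in>{1..n}. Y i \<omega> = y i})"
    then obtain y where "f y = c" "\<omega> \<in> space M" "\<forall>i\<in>{1..n}. Y i \<omega> = y i"
      by auto
    then show "\<omega> \<in> (\<lambda>\<omega>. f (\<lambda>i. Y i \<omega>)) -` {c} \<inter> space M"
      using f[of "\<lambda>i. Y i \<omega>" y] by simp
  qed
  have "countable ?T"
    by (rule countable_subset[OF _ countable_PiE[of "{1..n}" "\<lambda>_. UNIV :: nat set"]]) auto
  moreover have "{\<omega> \<in> space M. \<forall>i\<in>{1..n}. Y i \<omega> = y i} \<in> events" for y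
    by (intro sets.sets_Collect_finite_All events_Y) auto
  ultimately have "(\<Union>y\<in>?T. {\<omega> \<in> space M. \<forall>i\<in>{1..n}. Y i \<omega> = y i}) \<in> events"
    by (intro sets.countable_UN') auto
  then show "(\<lambda>\<omega>. f (\<lambda>i. Y i \<omega>)) -` {c} \<inter> space M \<in> events"
    unfolding preimage_eq .
qed simp

lemma measurable_L: "(\<lambda>\<omega>. L n (\<lambda>i. Y i \<omega>)) \<in> measurable M (count_space UNIV)"
proof (rule measurable_fun_of_Y)
  fix y y' :: "nat \<Rightarrow> nat"
  assume "\<And>i. i \<in> {1..n} \<Longrightarrow> y i = y' i"
  then show "L n y = L n y'"
    unfolding L_def by (metis image_cong)
qed

lemma events_L: "{\<omega> \<in> space M. P (L n (\<lambda>i. Y i \<omega>))} \<in> events"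
  using measurable_sets[OF measurable_L, of "{k. P k}"] by (simp add: vimage_def Int_def conj_commute)

definition gap_window :: "nat \<Rightarrow> nat \<Rightarrow> nat \<Rightarrow> 'a set" where
  "gap_window n k a = {\<omega> \<in> space M. (\<exists>i\<in>{1..n}. Y i \<omega> = a - 1)
      \<and> (\<forall>i\<in>{1..n}. Y i \<omega> \<notin> {a..<a + k}) \<and> (\<exists>i\<in>{1..n}. a + k \<le> Y i \<omega>)}"

lemma gap_window_eq:
  assumes "1 \<le> a"
  shows "gap_window n k a
    = all_Y_in n (- {a..<a + k}) - (all_Y_in n {..<a} \<union> all_Y_in n (- {a - 1..<a + k}))"
proof (intro equalityI subsetI)
  fix \<omega> assume "\<omega> \<in> gap_window n k a"
  then show "\<omega> \<in> all_Y_in n (- {a..<a + k}) - (all_Y_in n {..<a} \<union> all_Y_in n (- {a - 1..<a + k}))"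
    using assms unfolding gap_window_def all_Y_in_def by force
next
  fix \<omega> assume \<omega>: "\<omega> \<in> all_Y_in n (- {a..<a + k}) - (all_Y_in n {..<a} \<union> all_Y_in n (- {a - 1..<a + k}))"
  then have \<omega>': "\<omega> \<in> space M" "\<forall>i\<in>{1..n}. Y i \<omega> \<notin> {a..<a + k}"
      "\<exists>i\<in>{1..n}. a \<le> Y i \<omega>" "\<exists>i\<in>{1..n}. Y i \<omega> \<in> {a - 1..<a + k}"
    by (auto simp: all_Y_in_def not_less)
  moreover have "\<exists>i\<in>{1..n}. a + k \<le> Y i \<omega>"
    using \<omega>'(2,3) by (meson atLeastLessThan_iff not_less)
  moreover have "\<exists>i\<in>{1..n}. Y i \<omega> = a - 1"
  proof -
    obtain j where "j \<in> {1..n}" "Y j \<omega> \<in> {a - 1..<a + k}"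
      using \<omega>'(4) by blast
    moreover have "Y j \<omega> \<notin> {a..<a + k}"
      using \<omega>'(2) \<open>j \<in> {1..n}\<close> by blast
    ultimately show ?thesis
      using assms by (intro bexI[of _ j]) auto
  qed
  ultimately show "\<omega> \<in> gap_window n k a"
    using \<omega>' unfolding gap_window_def by auto
qed

lemma events_gap_window: "1 \<le> a \<Longrightarrow> gap_window n k a \<in> events"
  unfolding gap_window_eq by (intro sets.Diff sets.Un events_all_Y_in)

lemma prob_gap_window:
  assumes a: "1 \<le> a"
  shows "prob (gap_window n k a) = (1 - q ^ a + q ^ (a + k)) ^ n - (1 - q ^ a) ^ n
    - (1 - q ^ (a - 1) + q ^ (a + k)) ^ n + (1 - q ^ (a - 1)) ^ n"
proof -
  define A1 where "A1 = all_Y_in n (- {a..<a + k})"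
  define A2 where "A2 = all_Y_in n {..<a}"
  define A3 where "A3 = all_Y_in n (- {a - 1..<a + k})"
  have "A2 \<union> A3 \<subseteq> A1"
    using a by (auto simp: A1_def A2_def A3_def all_Y_in_def)
  moreover have "A2 \<inter> A3 = all_Y_in n {..<a - 1}"
    using a unfolding A2_def A3_def all_Y_in_Int by (intro arg_cong[where f = "all_Y_in n"]) auto
  moreover have "a - 1 + (k + 1) = a + k"
    using a by simp
  ultimately have "prob (gap_window n k a) = prob A1 - (prob A2 + prob A3 - prob (all_Y_in n {..<a - 1}))"
    unfolding gap_window_eq[OF a] A1_def[symmetric] A2_def[symmetric] A3_def[symmetric]
    using events_all_Y_in finite_measure_Diff[of A1 "A2 \<union> A3"] measure_Un3[of A2 M A3]
    by (simp add: A1_def A2_def A3_def fmeasurable_eq_sets)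
  moreover have "prob A1 = (1 - q ^ a + q ^ (a + k)) ^ n"
    unfolding A1_def by (rule prob_all_Y_in) (simp only: Compl_iff prob_Y_notin_window)
  moreover have "prob A2 = (1 - q ^ a) ^ n" "prob (all_Y_in n {..<a - 1}) = (1 - q ^ (a - 1)) ^ n"
    unfolding A2_def by (rule prob_all_Y_in, simp only: lessThan_iff prob_Y_less)+
  moreover have "prob A3 = (1 - q ^ (a - 1) + q ^ (a + k)) ^ n"
    unfolding A3_def using prob_Y_notin_window[of _ "a - 1" "k + 1"] \<open>a - 1 + (k + 1) = a + k\<close>
    by (intro prob_all_Y_in) simp
  ultimately show ?thesis
    by simp
qed

lemma longest_gap_ge_subset_gap_windows:
  assumes n: "1 \<le> n" and k: "1 \<le> k"
  shows "{\<omega> \<in> space M. k \<le> L n (\<lambda>i. Y i \<omega>)} \<subseteq> (\<Union>b. gap_window n k (Suc b))"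
proof
  fix \<omega> assume "\<omega> \<in> {\<omega> \<in> space M. k \<le> L n (\<lambda>i. Y i \<omega>)}"
  then have \<omega>: "\<omega> \<in> space M" "k \<le> longest_gap ((\<lambda>i. Y i \<omega>) ` {1..n})"
    by (auto simp: L_def)
  have "finite ((\<lambda>i. Y i \<omega>) ` {1..n})" "(\<lambda>i. Y i \<omega>) ` {1..n} \<noteq> {}"
    using n by auto
  from longest_gap_ge_imp_window[OF this k \<omega>(2)] obtain a where "1 \<le> a" "a - 1 \<in> (\<lambda>i. Y i \<omega>) ` {1..n}"
      "\<forall>s\<in>(\<lambda>i. Y i \<omega>) ` {1..n}. s \<notin> {a..<a + k}" "\<exists>s\<in>(\<lambda>i. Y i \<omega>) ` {1..n}. a + k \<le> s"
    by blast
  then have "\<omega> \<in> gap_window n k (Suc (a - 1))"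
    using \<omega>(1) unfolding gap_window_def by auto
  then show "\<omega> \<in> (\<Union>b. gap_window n k (Suc b))"
    by blast
qed

lemma prob_longest_gap_ge_le:
  assumes n: "1 \<le> n" and k: "1 \<le> k"
  shows "prob {\<omega> \<in> space M. k \<le> L n (\<lambda>i. Y i \<omega>)} \<le> q ^ k / (1 - q ^ k)"
proof -
  have r: "0 \<le> q ^ k" "q ^ k < 1"
    using q_pos q_less_one k by (auto simp: power_less_one_iff)
  have events: "gap_window n k (Suc b) \<in> events" for b
    by (simp add: events_gap_window)
  have "emeasure M {\<omega> \<in> space M. k \<le> L n (\<lambda>i. Y i \<omega>)} \<le> emeasure M (\<Union>b. gap_window n k (Suc b))"
    using longest_gap_ge_subset_gap_windows[OF n k] events by (intro emeasure_mono) auto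
  also have "\<dots> \<le> (\<Sum>b. emeasure M (gap_window n k (Suc b)))"
    using events by (intro emeasure_subadditive_countably) auto
  also have "\<dots> \<le> ennreal (q ^ k / (1 - q ^ k))"
  proof (intro suminf_le_const)
    fix N
    have "(\<Sum>b<N. prob (gap_window n k (Suc b))) \<le> q ^ k / (1 - q ^ k)"
      using window_sum_le[OF q_pos q_less_one r n, of N]
      by (simp add: prob_gap_window power_add algebra_simps)
    then show "(\<Sum>b<N. emeasure M (gap_window n k (Suc b))) \<le> ennreal (q ^ k / (1 - q ^ k))"
      by (simp add: emeasure_eq_measure sum_ennreal ennreal_leI)
  qed simp
  finally show ?thesis
    using r by (simp add: emeasure_eq_measure ennreal_le_iff)
qed

definition isolated_max_event :: "nat \<Rightarrow> nat \<Rightarrow> nat \<Rightarrow> nat \<Rightarrow> 'a set" where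
  "isolated_max_event n k i j =
    {\<omega> \<in> space M. \<forall>l\<in>{1..n}. Y l \<omega> \<in> (if l = i then {j + 1 + k} else {..j})}"

lemma events_isolated_max_event: "isolated_max_event n k i j \<in> events"
  unfolding isolated_max_event_def
proof (intro sets.sets_Collect_finite_All)
  fix l :: nat
  assume "l \<in> {1..n}"
  then show "{\<omega> \<in> space M. Y l \<omega> \<in> (if l = i then {j + 1 + k} else {..j})} \<in> events"
    using events_Y[of l "\<lambda>y. y \<in> (if l = i then {j + 1 + k} else {..j})"] by simp
qed simp

lemma prob_isolated_max_event:
  assumes i: "i \<in> {1..n}"
  shows "prob (isolated_max_event n k i j) = p * q ^ (j + 1 + k) * (1 - q ^ Suc j) ^ (n - 1)"
proof -
  define f where "f l = prob {\<omega> \<in> space M. Y l \<omega> \<in> (if l = i then {j + 1 + k} else {..j})}" for l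
  have "f l = 1 - q ^ Suc j" if "l \<in> {1..n} - {i}" for l
  proof -
    have "{\<omega> \<in> space M. Y l \<omega> \<in> (if l = i then {j + 1 + k} else {..j})} = {\<omega> \<in> space M. Y l \<omega> < Suc j}"
      using that by auto
    then show ?thesis
      using that prob_Y_less[of l "Suc j"] by (simp add: f_def)
  qed
  then have "(\<Prod>l\<in>{1..n} - {i}. f l) = (1 - q ^ Suc j) ^ (n - 1)"
    using i by simp
  moreover have "f i = q ^ (j + 1 + k) * p"
    using i prob_Y_eq[of i "j + 1 + k"] by (simp add: f_def)
  moreover have "prob (isolated_max_event n k i j) = f i * (\<Prod>l\<in>{1..n} - {i}. f l)"
    unfolding isolated_max_event_def f_def using i by (simp add: prob_all_Y prod.remove)
  ultimately show ?thesis
    by simp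
qed

lemma disjoint_isolated_max_events:
  "disjoint_family_on (\<lambda>(i, j). isolated_max_event n k i j) ({1..n} \<times> UNIV)"
proof (unfold disjoint_family_on_def, intro ballI impI)
  fix ij ij' :: "nat \<times> nat"
  assume ij: "ij \<in> {1..n} \<times> UNIV" "ij' \<in> {1..n} \<times> UNIV" "ij \<noteq> ij'"
  obtain i j i' j' where e: "ij = (i, j)" "ij' = (i', j')"
    by fastforce
  have i: "i \<in> {1..n}" "i' \<in> {1..n}"
    using ij e by auto
  have "\<omega> \<notin> isolated_max_event n k i j \<inter> isolated_max_event n k i' j'" for \<omega>
  proof
    assume "\<omega> \<in> isolated_max_event n k i j \<inter> isolated_max_event n k i' j'"
    then have all: "\<forall>l\<in>{1..n}. Y l \<omega> \<in> (if l = i then {j + 1 + k} else {..j})"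
        "\<forall>l\<in>{1..n}. Y l \<omega> \<in> (if l = i' then {j' + 1 + k} else {..j'})"
      by (auto simp: isolated_max_event_def)
    have max: "Y i \<omega> = j + 1 + k" "Y i' \<omega> = j' + 1 + k"
      using bspec[OF all(1) i(1)] bspec[OF all(2) i(2)] by auto
    show False
    proof (cases "i = i'")
      case True
      then show False
        using max ij(3) e by auto
    next
      case False
      then have "Y i \<omega> \<le> j'" "Y i' \<omega> \<le> j"
        using bspec[OF all(2) i(1)] bspec[OF all(1) i(2)] by auto
      then show False
        using max by simp
    qed
  qed
  then show "(case ij of (i, j) \<Rightarrow> isolated_max_event n k i j)
      \<inter> (case ij' of (i, j) \<Rightarrow> isolated_max_event n k i j) = {}"
    using e by auto
qed

lemma isolated_max_event_subset:
  assumes n: "2 \<le> n" and k: "1 \<le> k" and i: "i \<in> {1..n}"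
  shows "isolated_max_event n k i j \<subseteq> {\<omega> \<in> space M. k \<le> L n (\<lambda>l. Y l \<omega>)}"
proof
  fix \<omega> assume "\<omega> \<in> isolated_max_event n k i j"
  then have "\<omega> \<in> space M" and all: "\<forall>l\<in>{1..n}. Y l \<omega> \<in> (if l = i then {j + 1 + k} else {..j})"
    by (auto simp: isolated_max_event_def)
  have "Y l \<omega> < j + 1" if "l \<in> {1..n} - {i}" for l
    using bspec[OF all, of l] that by auto
  then have \<omega>: "\<omega> \<in> space M" "Y i \<omega> = j + 1 + k" "\<forall>l\<in>{1..n} - {i}. Y l \<omega> < j + 1"
    using bspec[OF all i] \<open>\<omega> \<in> space M\<close> by auto
  let ?S = "(\<lambda>l. Y l \<omega>) ` ({1..n} - {i})"
  have "(if i = 1 then 2 else 1) \<in> {1..n} - {i}"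
    using n i by auto
  then have "{1..n} - {i} \<noteq> {}"
    by blast
  moreover have "(\<lambda>l. Y l \<omega>) ` {1..n} = insert (Y i \<omega>) ?S"
    using i by blast
  ultimately have "k \<le> longest_gap ((\<lambda>l. Y l \<omega>) ` {1..n})"
    using le_longest_gap_insert[of ?S "j + 1" k] \<omega>(2,3) k by auto
  then show "\<omega> \<in> {\<omega> \<in> space M. k \<le> L n (\<lambda>l. Y l \<omega>)}"
    using \<omega>(1) by (simp add: L_def)
qed

lemma sum_le_prob_longest_gap_ge:
  assumes n: "2 \<le> n" and k: "1 \<le> k"
  shows "q ^ (k + 1) * (\<Sum>j<W. real n * (q ^ j - q ^ Suc j) * (1 - q ^ Suc j) ^ (n - 1))
    \<le> prob {\<omega> \<in> space M. k \<le> L n (\<lambda>i. Y i \<omega>)}"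
proof -
  let ?E = "\<lambda>(i, j). isolated_max_event n k i j"
  have "q ^ (k + 1) * (\<Sum>j<W. real n * (q ^ j - q ^ Suc j) * (1 - q ^ Suc j) ^ (n - 1))
      = (\<Sum>i\<in>{1..n}. \<Sum>j<W. p * q ^ (j + 1 + k) * (1 - q ^ Suc j) ^ (n - 1))"
    by (simp add: sum_distrib_left algebra_simps power_add)
  also have "\<dots> = (\<Sum>ij\<in>{1..n} \<times> {..<W}. prob (?E ij))"
    unfolding sum.cartesian_product by (intro sum.cong) (auto simp: prob_isolated_max_event)
  also have "\<dots> = prob (\<Union>ij\<in>{1..n} \<times> {..<W}. ?E ij)"
  proof (rule finite_measure_finite_Union[symmetric])
    show "?E ` ({1..n} \<times> {..<W}) \<subseteq> events"
      using events_isolated_max_event by auto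
    show "disjoint_family_on ?E ({1..n} \<times> {..<W})"
      by (rule disjoint_family_on_mono[OF _ disjoint_isolated_max_events]) auto
  qed simp
  also have "\<dots> \<le> prob {\<omega> \<in> space M. k \<le> L n (\<lambda>i. Y i \<omega>)}"
  proof (intro finite_measure_mono events_L UN_least)
    fix ij assume "ij \<in> {1..n} \<times> {..<W}"
    then show "?E ij \<subseteq> {\<omega> \<in> space M. k \<le> L n (\<lambda>i. Y i \<omega>)}"
      using isolated_max_event_subset[OF n k] by (cases ij) auto
  qed
  finally show ?thesis .
qed

lemma prob_longest_gap_ge_ge:
  assumes n: "2 \<le> n" and k: "1 \<le> k"
  shows "2 * q ^ (k + 1) / (1 + q) \<le> prob {\<omega> \<in> space M. k \<le> L n (\<lambda>i. Y i \<omega>)}"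
proof -
  have bound: "q ^ (k + 1) * (2 * (1 - q ^ W) ^ n) / (1 + q) \<le> prob {\<omega> \<in> space M. k \<le> L n (\<lambda>i. Y i \<omega>)}"
    for W
  proof -
    have "2 * (1 - q ^ W) ^ n / (1 + q)
        \<le> (\<Sum>j<W. real n * (q ^ j - q ^ Suc j) * (1 - q ^ Suc j) ^ (n - 1))"
      using power_le_trapezoid_sum[OF q_pos q_less_one n, of W] q_pos
      by (simp add: divide_le_eq mult.commute)
    then have "q ^ (k + 1) * (2 * (1 - q ^ W) ^ n / (1 + q))
        \<le> q ^ (k + 1) * (\<Sum>j<W. real n * (q ^ j - q ^ Suc j) * (1 - q ^ Suc j) ^ (n - 1))"
      using q_pos by (intro mult_left_mono) auto
    also have "\<dots> \<le> prob {\<omega> \<in> space M. k \<le> L n (\<lambda>i. Y i \<omega>)}"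
      by (rule sum_le_prob_longest_gap_ge[OF n k])
    finally show ?thesis
      by simp
  qed
  have "(\<lambda>W. q ^ (k + 1) * (2 * (1 - q ^ W) ^ n) / (1 + q))
      \<longlonglongrightarrow> q ^ (k + 1) * (2 * (1 - 0) ^ n) / (1 + q)"
    using q_pos q_less_one by (intro tendsto_intros LIMSEQ_power_zero) auto
  then have "q ^ (k + 1) * (2 * (1 - 0) ^ n) / (1 + q) \<le> prob {\<omega> \<in> space M. k \<le> L n (\<lambda>i. Y i \<omega>)}"
    by (rule LIMSEQ_le_const2) (use bound in auto)
  then show ?thesis
    by (simp add: algebra_simps)
qed

section \<open>Moments of the longest gap\<close>

definition gap_tail :: "nat \<Rightarrow> nat \<Rightarrow> real" where
  "gap_tail n k = prob {\<omega> \<in> space M. k < L n (\<lambda>i. Y i \<omega>)}"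

lemma gap_tail_le:
  assumes "1 \<le> n"
  shows "gap_tail n k \<le> q ^ Suc k / (1 - q ^ Suc k)"
  using prob_longest_gap_ge_le[OF assms, of "Suc k"] by (simp add: gap_tail_def Suc_le_eq)

lemma gap_tail_ge:
  assumes "2 \<le> n"
  shows "2 * q\<^sup>2 / (1 + q) * q ^ k \<le> gap_tail n k"
  using prob_longest_gap_ge_ge[OF assms, of "Suc k"] by (simp add: gap_tail_def Suc_le_eq power2_eq_square mult.assoc)

lemma gap_tail_sums_le:
  assumes "1 \<le> n"
  shows "summable (gap_tail n) \<and> suminf (gap_tail n) \<le> 1.5 / p + 1"
    and "summable (\<lambda>k. (2 * real k + 1) * gap_tail n k) \<and>
      (\<Sum>k. (2 * real k + 1) * gap_tail n k) \<le> 3.3 / p\<^sup>2 + 3 / (2 * p) + 2"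
  using tail_sums_le[OF p_pos p_less_one, of "gap_tail n"] gap_tail_le[OF assms]
  by (auto simp: gap_tail_def)

lemma
  assumes "1 \<le> n"
  shows integrable_L: "integrable M (\<lambda>\<omega>. real (L n (\<lambda>i. Y i \<omega>)))"
    and expectation_L_eq: "expectation (\<lambda>\<omega>. real (L n (\<lambda>i. Y i \<omega>))) = suminf (gap_tail n)"
    and integrable_L_sq: "integrable M (\<lambda>\<omega>. (real (L n (\<lambda>i. Y i \<omega>)))\<^sup>2)"
    and expectation_L_sq_eq:
      "expectation (\<lambda>\<omega>. (real (L n (\<lambda>i. Y i \<omega>)))\<^sup>2) = (\<Sum>k. (2 * real k + 1) * gap_tail n k)"
proof -
  have "summable (\<lambda>k. 1 * prob {\<omega> \<in> space M. k < L n (\<lambda>i. Y i \<omega>)})"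
    using gap_tail_sums_le(1)[OF assms] by (simp add: gap_tail_def[abs_def])
  note first = expectation_sum_lessThan[OF measurable_L _ this]
  then show "integrable M (\<lambda>\<omega>. real (L n (\<lambda>i. Y i \<omega>)))"
    and "expectation (\<lambda>\<omega>. real (L n (\<lambda>i. Y i \<omega>))) = suminf (gap_tail n)"
    by (simp_all add: gap_tail_def[abs_def])
  have "summable (\<lambda>k. (2 * real k + 1) * prob {\<omega> \<in> space M. k < L n (\<lambda>i. Y i \<omega>)})"
    using gap_tail_sums_le(2)[OF assms] by (simp add: gap_tail_def)
  note second = expectation_sum_lessThan[OF measurable_L _ this]
  moreover have "(real m)\<^sup>2 = (\<Sum>k<m. 2 * real k + 1)" for m
    by (simp add: sum_odd_eq_square)
  ultimately show "integrable M (\<lambda>\<omega>. (real (L n (\<lambda>i. Y i \<omega>)))\<^sup>2)"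
    and "expectation (\<lambda>\<omega>. (real (L n (\<lambda>i. Y i \<omega>)))\<^sup>2) = (\<Sum>k. (2 * real k + 1) * gap_tail n k)"
    by (simp_all add: gap_tail_def)
qed

lemma
  assumes "1 \<le> n"
  shows expectation_L_le: "expectation (\<lambda>\<omega>. real (L n (\<lambda>i. Y i \<omega>))) \<le> 1.5 / p + 1"
    and expectation_L_sq_le: "expectation (\<lambda>\<omega>. (real (L n (\<lambda>i. Y i \<omega>)))\<^sup>2) \<le> 3.3 / p\<^sup>2 + 3 / (2 * p) + 2"
  using gap_tail_sums_le[OF assms] by (simp_all add: expectation_L_eq[OF assms] expectation_L_sq_eq[OF assms])

lemma
  assumes "2 \<le> n"
  shows expectation_L_ge: "q\<^sup>2 / p \<le> expectation (\<lambda>\<omega>. real (L n (\<lambda>i. Y i \<omega>)))"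
    and expectation_L_sq_ge: "2 * q\<^sup>2 / p\<^sup>2 \<le> expectation (\<lambda>\<omega>. (real (L n (\<lambda>i. Y i \<omega>)))\<^sup>2)"
proof -
  define a where "a = 2 * q\<^sup>2 / (1 + q)"
  have n: "1 \<le> n"
    using assms by simp
  have tail_ge: "a * q ^ k \<le> gap_tail n k" for k
    unfolding a_def by (rule gap_tail_ge[OF assms])
  have "q\<^sup>2 * (1 + q) \<le> q\<^sup>2 * 2"
    using q_less_one by (intro mult_left_mono) auto
  then have "q\<^sup>2 \<le> a"
    using q_pos by (simp add: a_def field_simps)
  then have "q\<^sup>2 / p \<le> a * (1 / (1 - q))"
    using p_pos by (simp add: divide_right_mono)
  also have "\<dots> \<le> suminf (gap_tail n)"
  proof (rule sums_le[OF tail_ge])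
    show "(\<lambda>k. a * q ^ k) sums (a * (1 / (1 - q)))"
      using q_pos q_less_one by (intro sums_mult geometric_sums) auto
    show "gap_tail n sums suminf (gap_tail n)"
      using gap_tail_sums_le(1)[OF n] by (simp add: summable_sums)
  qed
  finally show "q\<^sup>2 / p \<le> expectation (\<lambda>\<omega>. real (L n (\<lambda>i. Y i \<omega>)))"
    by (simp add: expectation_L_eq[OF n])
  have "a * (1 + q) = 2 * q\<^sup>2"
    using q_pos by (simp add: a_def)
  then have "2 * q\<^sup>2 / p\<^sup>2 = a * ((1 + q) / (1 - q)\<^sup>2)"
    by simp
  also have "\<dots> \<le> (\<Sum>k. (2 * real k + 1) * gap_tail n k)"
  proof (rule sums_le)
    show "a * ((2 * real k + 1) * q ^ k) \<le> (2 * real k + 1) * gap_tail n k" for k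
      using mult_left_mono[OF tail_ge, of "2 * real k + 1" k] by (simp add: mult.left_commute)
    show "(\<lambda>k. a * ((2 * real k + 1) * q ^ k)) sums (a * ((1 + q) / (1 - q)\<^sup>2))"
      using q_pos q_less_one by (intro sums_mult sums_odd_mult_power) auto
    show "(\<lambda>k. (2 * real k + 1) * gap_tail n k) sums (\<Sum>k. (2 * real k + 1) * gap_tail n k)"
      using gap_tail_sums_le(2)[OF n] by (simp add: summable_sums)
  qed
  finally show "2 * q\<^sup>2 / p\<^sup>2 \<le> expectation (\<lambda>\<omega>. (real (L n (\<lambda>i. Y i \<omega>)))\<^sup>2)"
    by (simp add: expectation_L_sq_eq[OF n])
qed

lemma
  assumes "1 \<le> n"
  shows expectation_L_ge_correction:
      "q\<^sup>2 / p - q ^ (2 * n) / (1 - q ^ n) \<le> expectation (\<lambda>\<omega>. real (L n (\<lambda>i. Y i \<omega>)))"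
    and expectation_L_sq_ge_correction:
      "2 * q\<^sup>2 / p\<^sup>2 - 2 * q ^ (2 * n) / (1 - q ^ n)\<^sup>2 \<le> expectation (\<lambda>\<omega>. (real (L n (\<lambda>i. Y i \<omega>)))\<^sup>2)"
proof -
  consider "n = 1" | "2 \<le> n"
    using assms by linarith
  then have "q\<^sup>2 / p - q ^ (2 * n) / (1 - q ^ n) \<le> expectation (\<lambda>\<omega>. real (L n (\<lambda>i. Y i \<omega>)))
    \<and> 2 * q\<^sup>2 / p\<^sup>2 - 2 * q ^ (2 * n) / (1 - q ^ n)\<^sup>2 \<le> expectation (\<lambda>\<omega>. (real (L n (\<lambda>i. Y i \<omega>)))\<^sup>2)"
  proof cases
    case 1
    \<comment> \<open>\<open>L 1 = 0\<close>: the correction term exists only to make the bounds vanish here; for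
      \<open>n \<ge> 2\<close> the uncorrected bounds hold.\<close>
    then show ?thesis
      using p_pos p_less_one by (simp add: L_def longest_gap_singleton power2_eq_square)
  next
    case 2
    then show ?thesis
      using corrected_lower_bounds[OF p_pos p_less_one assms] expectation_L_ge expectation_L_sq_ge
      by (meson order_trans)
  qed
  then show "q\<^sup>2 / p - q ^ (2 * n) / (1 - q ^ n) \<le> expectation (\<lambda>\<omega>. real (L n (\<lambda>i. Y i \<omega>)))"
    and "2 * q\<^sup>2 / p\<^sup>2 - 2 * q ^ (2 * n) / (1 - q ^ n)\<^sup>2 \<le> expectation (\<lambda>\<omega>. (real (L n (\<lambda>i. Y i \<omega>)))\<^sup>2)"
    by auto
qed

lemma variance_L_nonneg: "0 \<le> variance (\<lambda>\<omega>. real (L n (\<lambda>i. Y i \<omega>)))"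
  by (intro integral_nonneg_AE) auto

lemma variance_L_le:
  assumes n: "1 \<le> n" and c: "0 \<le> c" "c \<le> expectation (\<lambda>\<omega>. real (L n (\<lambda>i. Y i \<omega>)))"
  shows "variance (\<lambda>\<omega>. real (L n (\<lambda>i. Y i \<omega>))) \<le> 3.3 / p\<^sup>2 + 3 / (2 * p) + 2 - c\<^sup>2"
proof -
  have "c\<^sup>2 \<le> (expectation (\<lambda>\<omega>. real (L n (\<lambda>i. Y i \<omega>))))\<^sup>2"
    using c by (intro power_mono) auto
  then show ?thesis
    using variance_eq[OF integrable_L[OF n] integrable_L_sq[OF n]] expectation_L_sq_le[OF n]
    by simp
qed

lemma variance_L_le_correction:
  assumes "1 \<le> n"
  shows "variance (\<lambda>\<omega>. real (L n (\<lambda>i. Y i \<omega>)))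
    \<le> 3.3 / p\<^sup>2 + 3 / (2 * p) + 2 - (q\<^sup>2 / p - q ^ (2 * n) / (1 - q ^ n))\<^sup>2"
  using variance_L_le[OF assms corrected_lower_bounds(3)[OF p_pos p_less_one assms]]
    expectation_L_ge_correction[OF assms] by blast

lemma asymptotic_moment_bounds:
  shows "ereal (q\<^sup>2 / p) \<le> liminf (\<lambda>n. ereal (expectation (\<lambda>\<omega>. real (L n (\<lambda>i. Y i \<omega>)))))"
    and "limsup (\<lambda>n. ereal (expectation (\<lambda>\<omega>. real (L n (\<lambda>i. Y i \<omega>))))) \<le> ereal (1.5 / p + 1)"
    and "ereal (2 * q\<^sup>2 / p\<^sup>2) \<le> liminf (\<lambda>n. ereal (expectation (\<lambda>\<omega>. (real (L n (\<lambda>i. Y i \<omega>)))\<^sup>2)))"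
    and "limsup (\<lambda>n. ereal (expectation (\<lambda>\<omega>. (real (L n (\<lambda>i. Y i \<omega>)))\<^sup>2)))
      \<le> ereal (3.3 / p\<^sup>2 + 3 / (2 * p) + 2)"
    and "ereal 0 \<le> liminf (\<lambda>n. ereal (variance (\<lambda>\<omega>. real (L n (\<lambda>i. Y i \<omega>)))))"
    and "limsup (\<lambda>n. ereal (variance (\<lambda>\<omega>. real (L n (\<lambda>i. Y i \<omega>))))) \<le> ereal (2.3 / p\<^sup>2 + 5.5 / p)"
proof -
  have large: "eventually (\<lambda>n. 2 \<le> n) sequentially"
    by (rule eventually_ge_at_top)
  have variance_le: "variance (\<lambda>\<omega>. real (L n (\<lambda>i. Y i \<omega>))) \<le> 2.3 / p\<^sup>2 + 5.5 / p" if "2 \<le> n" for n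
    using variance_L_le[of n "q\<^sup>2 / p"] expectation_L_ge[OF that]
      second_moment_bound_minus_square_le[OF p_pos] that p_pos
    by force
  show "ereal (q\<^sup>2 / p) \<le> liminf (\<lambda>n. ereal (expectation (\<lambda>\<omega>. real (L n (\<lambda>i. Y i \<omega>)))))"
    "ereal (2 * q\<^sup>2 / p\<^sup>2) \<le> liminf (\<lambda>n. ereal (expectation (\<lambda>\<omega>. (real (L n (\<lambda>i. Y i \<omega>)))\<^sup>2)))"
    "ereal 0 \<le> liminf (\<lambda>n. ereal (variance (\<lambda>\<omega>. real (L n (\<lambda>i. Y i \<omega>)))))"
    using expectation_L_ge expectation_L_sq_ge variance_L_nonneg
    by (auto intro!: Liminf_bounded eventually_mono[OF large])
  show "limsup (\<lambda>n. ereal (expectation (\<lambda>\<omega>. real (L n (\<lambda>i. Y i \<omega>))))) \<le> ereal (1.5 / p + 1)"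
    "limsup (\<lambda>n. ereal (expectation (\<lambda>\<omega>. (real (L n (\<lambda>i. Y i \<omega>)))\<^sup>2)))
      \<le> ereal (3.3 / p\<^sup>2 + 3 / (2 * p) + 2)"
    "limsup (\<lambda>n. ereal (variance (\<lambda>\<omega>. real (L n (\<lambda>i. Y i \<omega>))))) \<le> ereal (2.3 / p\<^sup>2 + 5.5 / p)"
    using expectation_L_le expectation_L_sq_le variance_le
    by (auto intro!: Limsup_bounded eventually_mono[OF large])
qed

end

theorem lemma2:
  fixes M :: "'a measure" and Y :: "nat \<Rightarrow> 'a \<Rightarrow> nat" and p :: real
  assumes "prob_space M"
    and "0 < p" and "p < 1"
    and "prob_space.indep_vars M (\<lambda>_. count_space UNIV) Y {1..}"
    and "\<And>i k. i \<ge> 1 \<Longrightarrow> measure M {\<omega> \<in> space M. Y i \<omega> = k} = (1 - p) ^ k * p"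
  defines "EL \<equiv> \<lambda>n. prob_space.expectation M (\<lambda>\<omega>. real (L n (\<lambda>i. Y i \<omega>)))"
    and "EL2 \<equiv> \<lambda>n. prob_space.expectation M (\<lambda>\<omega>. (real (L n (\<lambda>i. Y i \<omega>)))\<^sup>2)"
    and "VL \<equiv> \<lambda>n. prob_space.variance M (\<lambda>\<omega>. real (L n (\<lambda>i. Y i \<omega>)))"
  shows "(\<forall>n\<ge>1.
           integrable M (\<lambda>\<omega>. real (L n (\<lambda>i. Y i \<omega>))) \<and>
           integrable M (\<lambda>\<omega>. (real (L n (\<lambda>i. Y i \<omega>)))\<^sup>2) \<and>
           (1 - p)\<^sup>2 / p - (1 - p) ^ (2 * n) / (1 - (1 - p) ^ n) \<le> EL n \<and>
           EL n \<le> 1.5 / p + 1 \<and>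
           2 * (1 - p)\<^sup>2 / p\<^sup>2 - 2 * (1 - p) ^ (2 * n) / (1 - (1 - p) ^ n)\<^sup>2 \<le> EL2 n \<and>
           EL2 n \<le> 3.3 / p\<^sup>2 + 3 / (2 * p) + 2 \<and>
           0 \<le> VL n \<and>
           VL n \<le> 3.3 / p\<^sup>2 + 3 / (2 * p) + 2
                   - ((1 - p)\<^sup>2 / p - (1 - p) ^ (2 * n) / (1 - (1 - p) ^ n))\<^sup>2) \<and>
    ereal ((1 - p)\<^sup>2 / p) \<le> liminf (\<lambda>n. ereal (EL n)) \<and>
    limsup (\<lambda>n. ereal (EL n)) \<le> ereal (1.5 / p + 1) \<and>
    ereal (2 * (1 - p)\<^sup>2 / p\<^sup>2) \<le> liminf (\<lambda>n. ereal (EL2 n)) \<and>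
    limsup (\<lambda>n. ereal (EL2 n)) \<le> ereal (3.3 / p\<^sup>2 + 3 / (2 * p) + 2) \<and>
    ereal 0 \<le> liminf (\<lambda>n. ereal (VL n)) \<and>
    limsup (\<lambda>n. ereal (VL n)) \<le> ereal (2.3 / p\<^sup>2 + 5.5 / p)"
proof -
  interpret iid_geometric M Y p
    using assms(1-5) by (simp add: iid_geometric_def iid_geometric_axioms_def)
  show ?thesis
    unfolding EL_def EL2_def VL_def
    using integrable_L integrable_L_sq expectation_L_ge_correction expectation_L_le
      expectation_L_sq_ge_correction expectation_L_sq_le variance_L_nonneg variance_L_le_correction
      asymptotic_moment_bounds
    by simp
qed

end
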